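(* Let $(M,F)$ be a conic pseudo-Riemannian surface and $\overline F=e^\phi F$ an anisotropic conformal change such that $\overline F$ is Berwald. Then the Berwald connection of $\overline F$ coincides with the Levi-Civita (Berwald) connection of $F$, i.e. $\overline G^i_{jk}=G^i_{jk}$ ($\overline F$ is Riemann metrizable by $F$), if and only if $\phi_{,1}=\phi_{,2}=0$.
   Context: Throughout, $M$ is a smooth $2$-dimensional manifold, $TM_0$ its slit tangent bundle with induced local coordinates $(x^i,y^i)$, $\partial_i=\partial/\partial x^i$, $\dot\partial_i=\partial/\partial y^i$. A function is called $h(r)$ if it is positively homogeneous of degree $r$ in $y$. A conic pseudo-Finsler surface $(M,F)$ consists of a conic subbundle $\mathcal A\subset TM_0$ (an open set invariant under $y\mapsto\lambda y$, $\lambda>0$, projecting onto $M$) and a smooth $h(1)$ function $F:\mathcal A\to\mathbb R$ such that $g_{ij}=\frac12\dot\partial_i\dot\partial_jF^2$ is nondegenerate. Put $\ell_i=\dot\partial_iF$, $\ell^i=y^i/F$. Modified Berwald frame: $\varepsilon\in\{1,-1\}$ and a covector $m_i$ satisfy $g_{ij}=\ell_i\ell_j+\varepsilon m_im_j$, $m^i=g^{ij}m_j$. The geodesic spray of $F$ is $S=y^i\partial_i-2G^i\dot\partial_i$; $G^i_j=\dot\partial_jG^i$, $G^i_{jk}=\dot\partial_kG^i_j$ (Berwald connection), $\delta_i=\partial_i-G^j_i\dot\partial_j$. For a smooth function $f$: $f_{,1}=\ell^i\delta_if$, $f_{,2}=\varepsilon m^i\delta_if$. $F$ is (conic pseudo-)Riemannian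 if $F^2$ is quadratic in $y$. Anisotropic conformal change: $\phi$ is a smooth $h(0)$ function on $\mathcal A$ with $F^2(\dot\partial_i\dot\partial_j\phi+\dot\partial_i\phi\,\dot\partial_j\phi)m^im^j+\varepsilon\ne0$, and $\overline F=e^{\phi}F$, with spray coefficients $\overline G^i$ and Berwald connection $\overline G^i_{jk}=\dot\partial_j\dot\partial_k\overline G^i$. $\overline F$ is Berwald iff the $\overline G^i$ are quadratic in $y$. *)

theory Defs
  imports "HOL-Analysis.Analysis"
begin

text \<open>Local-coordinate rendering. A point of TM is a pair (x,y) of real^2 vectors;
  indices range over the 2-element type 2.\<close>

type_synonym pt = "(real^2) \<times> (real^2)"

fun iter_pd :: "pt list \<Rightarrow> (pt \<Rightarrow> real) \<Rightarrow> pt \<Rightarrow> real" where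
  "iter_pd [] f = f"
| "iter_pd (v # vs) f = (\<lambda>p. frechet_derivative (iter_pd vs f) (at p) v)"

definition smooth_on :: "pt set \<Rightarrow> (pt \<Rightarrow> real) \<Rightarrow> bool" where
  "smooth_on A f \<longleftrightarrow> (\<forall>vs. \<forall>p\<in>A. iter_pd vs f differentiable (at p))"

text \<open>Partial derivatives: dX i = \<partial>_i (w.r.t. x^i), dY i = dot-\<partial>_i (w.r.t. y^i).\<close>
definition dX :: "2 \<Rightarrow> (pt \<Rightarrow> real) \<Rightarrow> pt \<Rightarrow> real" where
  "dX i f p = frechet_derivative f (at p) (axis i 1, 0)"

definition dY :: "2 \<Rightarrow> (pt \<Rightarrow> real) \<Rightarrow> pt \<Rightarrow> real" where
  "dY i f p = frechet_derivative f (at p) (0, axis i 1)"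

text \<open>Conic subbundle of TM_0 over the chart domain M = fst ` A.\<close>
definition conic_subbundle :: "pt set \<Rightarrow> bool" where
  "conic_subbundle A \<longleftrightarrow> open A \<and> (\<forall>(x,y)\<in>A. y \<noteq> 0)
     \<and> (\<forall>(x,y)\<in>A. \<forall>t::real. t > 0 \<longrightarrow> (x, t *\<^sub>R y) \<in> A)"

definition homog_on :: "pt set \<Rightarrow> nat \<Rightarrow> (pt \<Rightarrow> real) \<Rightarrow> bool" where
  "homog_on A r f \<longleftrightarrow> (\<forall>(x,y)\<in>A. \<forall>t::real. t > 0 \<longrightarrow> f (x, t *\<^sub>R y) = t ^ r * f (x, y))"

definition gmat :: "(pt \<Rightarrow> real) \<Rightarrow> pt \<Rightarrow> real^2^2" where
  "gmat F p = (\<chi> i j. dY i (dY j (\<lambda>q. (F q)^2)) p / 2)"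

definition ginv :: "(pt \<Rightarrow> real) \<Rightarrow> pt \<Rightarrow> real^2^2" where
  "ginv F p = matrix_inv (gmat F p)"

definition pseudo_finsler :: "pt set \<Rightarrow> (pt \<Rightarrow> real) \<Rightarrow> bool" where
  "pseudo_finsler A F \<longleftrightarrow> conic_subbundle A \<and> smooth_on A F \<and> homog_on A 1 F
     \<and> (\<forall>p\<in>A. F p \<noteq> 0) \<and> (\<forall>p\<in>A. det (gmat F p) \<noteq> 0)"

definition pseudo_riemannian :: "pt set \<Rightarrow> (pt \<Rightarrow> real) \<Rightarrow> bool" where
  "pseudo_riemannian A F \<longleftrightarrow> (\<exists>a :: real^2 \<Rightarrow> real^2^2. \<forall>(x,y)\<in>A.
      (F (x,y))^2 = (\<Sum>i\<in>UNIV. \<Sum>j\<in>UNIV. a x $ i $ j * y $ i * y $ j))"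

definition spray :: "(pt \<Rightarrow> real) \<Rightarrow> 2 \<Rightarrow> pt \<Rightarrow> real" where
  "spray F i p = (1/4) * (\<Sum>l\<in>UNIV. ginv F p $ i $ l *
      ((\<Sum>k\<in>UNIV. snd p $ k * dX k (dY l (\<lambda>q. (F q)^2)) p) - dX l (\<lambda>q. (F q)^2) p))"

definition nonlin_conn :: "(pt \<Rightarrow> real) \<Rightarrow> 2 \<Rightarrow> 2 \<Rightarrow> pt \<Rightarrow> real" where
  "nonlin_conn F i j = dY j (spray F i)"

definition berwald_conn :: "(pt \<Rightarrow> real) \<Rightarrow> 2 \<Rightarrow> 2 \<Rightarrow> 2 \<Rightarrow> pt \<Rightarrow> real" where
  "berwald_conn F i j k = dY k (dY j (spray F i))"

definition is_berwald :: "pt set \<Rightarrow> (pt \<Rightarrow> real) \<Rightarrow> bool" where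
  "is_berwald A F \<longleftrightarrow> (\<exists>c :: 2 \<Rightarrow> real^2 \<Rightarrow> real^2^2. \<forall>(x,y)\<in>A. \<forall>i.
      spray F i (x,y) = (\<Sum>j\<in>UNIV. \<Sum>k\<in>UNIV. c i x $ j $ k * y $ j * y $ k))"

definition delta :: "(pt \<Rightarrow> real) \<Rightarrow> 2 \<Rightarrow> (pt \<Rightarrow> real) \<Rightarrow> pt \<Rightarrow> real" where
  "delta F i f p = dX i f p - (\<Sum>j\<in>UNIV. nonlin_conn F j i p * dY j f p)"

definition berwald_frame :: "pt set \<Rightarrow> (pt \<Rightarrow> real) \<Rightarrow> (pt \<Rightarrow> real) \<Rightarrow> (pt \<Rightarrow> real^2) \<Rightarrow> bool" where
  "berwald_frame A F eps m \<longleftrightarrow> (\<forall>p\<in>A. (eps p = 1 \<or> eps p = -1) \<and>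
     (\<forall>i j. gmat F p $ i $ j = dY i F p * dY j F p + eps p * m p $ i * m p $ j))"

definition m_up :: "(pt \<Rightarrow> real) \<Rightarrow> (pt \<Rightarrow> real^2) \<Rightarrow> pt \<Rightarrow> real^2" where
  "m_up F m p = ginv F p *v m p"

definition ell_up :: "(pt \<Rightarrow> real) \<Rightarrow> pt \<Rightarrow> real^2" where
  "ell_up F p = (1 / F p) *\<^sub>R snd p"

definition comma1 :: "(pt \<Rightarrow> real) \<Rightarrow> (pt \<Rightarrow> real) \<Rightarrow> pt \<Rightarrow> real" where
  "comma1 F f p = (\<Sum>i\<in>UNIV. ell_up F p $ i * delta F i f p)"

definition comma2 :: "(pt \<Rightarrow> real) \<Rightarrow> (pt \<Rightarrow> real) \<Rightarrow> (pt \<Rightarrow> real^2) \<Rightarrow> (pt \<Rightarrow> real) \<Rightarrow> pt \<Rightarrow> real" where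
  "comma2 F eps m f p = eps p * (\<Sum>i\<in>UNIV. m_up F m p $ i * delta F i f p)"

definition aniso_conformal :: "pt set \<Rightarrow> (pt \<Rightarrow> real) \<Rightarrow> (pt \<Rightarrow> real) \<Rightarrow> (pt \<Rightarrow> real^2) \<Rightarrow> (pt \<Rightarrow> real) \<Rightarrow> bool" where
  "aniso_conformal A F eps m phi \<longleftrightarrow> smooth_on A phi \<and> homog_on A 0 phi \<and>
     (\<forall>p\<in>A. (F p)^2 * (\<Sum>i\<in>UNIV. \<Sum>j\<in>UNIV.
        (dY i (dY j phi) p + dY i phi p * dY j phi p) * m_up F m p $ i * m_up F m p $ j) + eps p \<noteq> 0)"

end

theory Submission
  imports Defs
begin

text \<open>Both sides of the equivalence are statements about the geodesic sprays. The Berwald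
  connection is the second vertical derivative of the spray, and the spray coefficients are
  smooth and positively homogeneous of degree 2, so by Euler's relation two Berwald connections
  agree exactly when the sprays agree. The spray of a conic pseudo-Finsler function L is
  characterised as the unique smooth fibrewise quadratic family whose horizontal derivative
  annihilates L^2. For L = e^phi F, measured with the horizontal derivative delta of F, one finds
  delta_j (e^(2 phi) F^2) = 2 e^(2 phi) F^2 delta_j phi, because delta_j F^2 = 0. Hence the sprays
  coincide iff delta_j phi = 0 for j = 1, 2, and since l^i and m^i form a basis this is
  phi_(,1) = phi_(,2) = 0.\<close>
section \<open>Directional derivatives\<close>

definition dir_deriv :: "pt \<Rightarrow> (pt \<Rightarrow> real) \<Rightarrow> pt \<Rightarrow> real" where
  "dir_deriv v f p = frechet_derivative f (at p) v"

lemma dX_eq_dir_deriv: "dX i f = dir_deriv (axis i 1, 0) f"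
  by (simp add: dX_def dir_deriv_def fun_eq_iff)

lemma dY_eq_dir_deriv: "dY i f = dir_deriv (0, axis i 1) f"
  by (simp add: dY_def dir_deriv_def fun_eq_iff)

lemma frechet_derivative_cong_open:
  assumes "open A" "p \<in> A" "\<And>q. q \<in> A \<Longrightarrow> f q = g q"
  shows "frechet_derivative f (at p) = frechet_derivative g (at p)"
proof -
  have "(f has_derivative f') (at p) \<longleftrightarrow> (g has_derivative f') (at p)" for f'
    using has_derivative_transform_within_open[of f f' p UNIV A g]
      has_derivative_transform_within_open[of g f' p UNIV A f] assms by metis
  then show ?thesis unfolding frechet_derivative_def by simp
qed

lemma dir_deriv_cong_open:
  "open A \<Longrightarrow> p \<in> A \<Longrightarrow> (\<And>q. q \<in> A \<Longrightarrow> f q = g q) \<Longrightarrow> dir_deriv v f p = dir_deriv v g p"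
  unfolding dir_deriv_def using frechet_derivative_cong_open by metis

lemma dir_deriv_at: "(f has_derivative f') (at p) \<Longrightarrow> dir_deriv v f p = f' v"
  unfolding dir_deriv_def using frechet_derivative_at by metis

lemma has_derivative_dir_deriv:
  "f differentiable (at p) \<Longrightarrow> (f has_derivative (\<lambda>v. dir_deriv v f p)) (at p)"
  unfolding dir_deriv_def using frechet_derivative_works by (metis eta_contract_eq)

lemma linear_dir_deriv: "f differentiable (at p) \<Longrightarrow> linear (\<lambda>v. dir_deriv v f p)"
  using has_derivative_dir_deriv has_derivative_linear by blast

lemma dir_deriv_scaleR_dir:
  "f differentiable (at p) \<Longrightarrow> dir_deriv (c *\<^sub>R u) f p = c * dir_deriv u f p"
  using linear_dir_deriv[of f p] linear_scale by fastforce

lemma dir_deriv_sum_dir: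
  "f differentiable (at p) \<Longrightarrow> dir_deriv (\<Sum>i\<in>S. u i) f p = (\<Sum>i\<in>S. dir_deriv (u i) f p)"
  using linear_dir_deriv[of f p] linear_sum by fastforce

lemma vec2_eq_sum_axis: "(y::real^2) = (\<Sum>i\<in>UNIV. y $ i *\<^sub>R axis i 1)"
  by (simp add: vec_eq_iff sum_2 axis_def) (metis exhaust_2 one_neq_zero num1_eq1 zero_neq_one)

lemma dir_deriv_vertical:
  assumes f: "f differentiable (at p)"
  shows "dir_deriv (0, y) f p = (\<Sum>i\<in>UNIV. y $ i * dY i f p)"
proof -
  have "(0::real^2, y) = (\<Sum>i\<in>UNIV. y $ i *\<^sub>R (0, axis i 1))"
    by (subst vec2_eq_sum_axis[of y]) (simp add: sum_prod)
  then show ?thesis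
    by (simp only: dir_deriv_sum_dir[OF f] dir_deriv_scaleR_dir[OF f] dY_eq_dir_deriv)
qed

lemma dir_deriv_const [simp]: "dir_deriv v (\<lambda>q. c) p = 0"
  by (simp add: dir_deriv_def)

lemma dir_deriv_add:
  "f differentiable (at p) \<Longrightarrow> g differentiable (at p) \<Longrightarrow>
   dir_deriv v (\<lambda>q. f q + g q) p = dir_deriv v f p + dir_deriv v g p"
  using dir_deriv_at[OF has_derivative_add[OF has_derivative_dir_deriv has_derivative_dir_deriv]]
  by blast

lemma dir_deriv_diff:
  "f differentiable (at p) \<Longrightarrow> g differentiable (at p) \<Longrightarrow>
   dir_deriv v (\<lambda>q. f q - g q) p = dir_deriv v f p - dir_deriv v g p"
  using dir_deriv_at[OF has_derivative_diff[OF has_derivative_dir_deriv has_derivative_dir_deriv]]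
  by blast

lemma dir_deriv_minus: "f differentiable (at p) \<Longrightarrow> dir_deriv v (\<lambda>q. - f q) p = - dir_deriv v f p"
  using dir_deriv_at[OF has_derivative_minus[OF has_derivative_dir_deriv]] by blast

lemma dir_deriv_mult:
  "f differentiable (at p) \<Longrightarrow> g differentiable (at p) \<Longrightarrow>
   dir_deriv v (\<lambda>q. f q * g q) p = dir_deriv v f p * g p + f p * dir_deriv v g p"
  using dir_deriv_at[OF has_derivative_mult[OF has_derivative_dir_deriv has_derivative_dir_deriv]]
  by (simp add: algebra_simps)

lemma dir_deriv_cmult:
  "f differentiable (at p) \<Longrightarrow> dir_deriv v (\<lambda>q. c * f q) p = c * dir_deriv v f p"
  using dir_deriv_mult[of "\<lambda>q. c" p f v] by simp

lemma dir_deriv_power2: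
  "f differentiable (at p) \<Longrightarrow> dir_deriv v (\<lambda>q. (f q)\<^sup>2) p = 2 * f p * dir_deriv v f p"
  using dir_deriv_mult[of f p f v] by (simp add: power2_eq_square)

lemma dir_deriv_sum:
  "finite S \<Longrightarrow> (\<And>i. i \<in> S \<Longrightarrow> f i differentiable (at p)) \<Longrightarrow>
   dir_deriv v (\<lambda>q. \<Sum>i\<in>S. f i q) p = (\<Sum>i\<in>S. dir_deriv v (f i) p)"
proof (induction S rule: finite_induct)
  case (insert x S)
  then have "dir_deriv v (\<lambda>q. f x q + (\<Sum>i\<in>S. f i q)) p
      = dir_deriv v (f x) p + dir_deriv v (\<lambda>q. \<Sum>i\<in>S. f i q) p"
    by (intro dir_deriv_add) (auto intro!: differentiable_sum)
  with insert show ?case by simp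
qed simp

lemma has_derivative_exp_at: "(exp has_derivative (*) (exp (x::real))) (at x)"
  using DERIV_exp[of x, unfolded has_field_derivative_def] .
lemma dir_deriv_exp:
  "f differentiable (at p) \<Longrightarrow> dir_deriv v (\<lambda>q. exp (f q)) p = exp (f p) * dir_deriv v f p"
  using dir_deriv_at[OF has_derivative_compose[OF has_derivative_dir_deriv has_derivative_exp_at]] .

lemma differentiable_exp_comp:
  "(f::pt \<Rightarrow> real) differentiable (at p) \<Longrightarrow> (\<lambda>q. exp (f q)) differentiable (at p)"
  using has_derivative_compose[OF has_derivative_dir_deriv has_derivative_exp_at]
  unfolding differentiable_def by blast

lemma dir_deriv_inverse:
  assumes f: "f differentiable (at p)" and "f p \<noteq> 0"
  shows "dir_deriv v (\<lambda>q. inverse (f q)) p = - dir_deriv v f p / (f p)\<^sup>2"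
  using dir_deriv_at[OF Deriv.has_derivative_inverse[OF \<open>f p \<noteq> 0\<close> has_derivative_dir_deriv[OF f]]]
    \<open>f p \<noteq> 0\<close> by (simp add: field_simps power2_eq_square)

lemma bounded_linear_snd_nth: "bounded_linear (\<lambda>q::pt. snd q $ k)"
  using bounded_linear_compose[OF bounded_linear_vec_nth[of k] bounded_linear_snd[where 'a="real^2" and 'b="real^2"]] by simp

lemma dir_deriv_snd_nth: "dir_deriv v (\<lambda>q. snd q $ k) p = snd v $ k"
  using dir_deriv_at[OF bounded_linear_imp_has_derivative[OF bounded_linear_snd_nth]] by simp

lemma differentiable_snd_nth: "(\<lambda>q::pt. snd q $ k) differentiable (at p)"
  using bounded_linear_imp_has_derivative[OF bounded_linear_snd_nth] differentiable_def by blast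

lemma dir_deriv_comp_linear:
  assumes s: "bounded_linear s" and f: "f differentiable (at (s p))"
  shows "dir_deriv v (\<lambda>q. f (s q)) p = dir_deriv (s v) f (s p)"
  using dir_deriv_at[OF has_derivative_compose[OF bounded_linear_imp_has_derivative[OF s]
        has_derivative_dir_deriv[OF f]]] .

lemma dir_deriv_translate:
  assumes f: "f differentiable (at (p + c))"
  shows "dir_deriv v (\<lambda>q. f (q + c)) p = dir_deriv v f (p + c)"
    and "(\<lambda>q. f (q + c)) differentiable (at p)"
proof -
  have "((\<lambda>q. q + c) has_derivative (\<lambda>v. v)) (at p)"
    using has_derivative_add[OF has_derivative_ident has_derivative_const[of c]] by simp
  from has_derivative_compose[OF this has_derivative_dir_deriv[OF f]]
  show "dir_deriv v (\<lambda>q. f (q + c)) p = dir_deriv v f (p + c)"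
    and "(\<lambda>q. f (q + c)) differentiable (at p)"
    using dir_deriv_at differentiable_def by blast+
qed

lemmas dY_const [simp] = dir_deriv_const[where v="(0, axis j 1)" for j, folded dY_eq_dir_deriv]
lemmas dY_cong_open = dir_deriv_cong_open[where v="(0, axis j 1)" for j, folded dY_eq_dir_deriv]
lemmas dY_add = dir_deriv_add[where v="(0, axis j 1)" for j, folded dY_eq_dir_deriv]
lemmas dY_diff = dir_deriv_diff[where v="(0, axis j 1)" for j, folded dY_eq_dir_deriv]
lemmas dY_mult = dir_deriv_mult[where v="(0, axis j 1)" for j, folded dY_eq_dir_deriv]
lemmas dY_cmult = dir_deriv_cmult[where v="(0, axis j 1)" for j, folded dY_eq_dir_deriv]
lemmas dY_power2 = dir_deriv_power2[where v="(0, axis j 1)" for j, folded dY_eq_dir_deriv]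
lemmas dY_sum = dir_deriv_sum[where v="(0, axis j 1)" for j, folded dY_eq_dir_deriv]
lemmas dY_exp = dir_deriv_exp[where v="(0, axis j 1)" for j, folded dY_eq_dir_deriv]
lemmas dX_mult = dir_deriv_mult[where v="(axis j 1, 0)" for j, folded dX_eq_dir_deriv]
lemmas dX_cmult = dir_deriv_cmult[where v="(axis j 1, 0)" for j, folded dX_eq_dir_deriv]
lemmas dX_exp = dir_deriv_exp[where v="(axis j 1, 0)" for j, folded dX_eq_dir_deriv]

lemma dY_snd_nth: "dY j (\<lambda>q. snd q $ k) p = (if k = j then 1 else 0)"
  by (simp add: dY_eq_dir_deriv dir_deriv_snd_nth axis_def)

section \<open>Smoothness\<close>

definition smooth_upto :: "pt set \<Rightarrow> nat \<Rightarrow> (pt \<Rightarrow> real) \<Rightarrow> bool" where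
  "smooth_upto A n f \<longleftrightarrow> (\<forall>vs. length vs \<le> n \<longrightarrow> (\<forall>p\<in>A. iter_pd vs f differentiable (at p)))"

lemma iter_pd_snoc: "iter_pd (vs @ [v]) f = iter_pd vs (dir_deriv v f)"
  by (induction vs) (simp add: dir_deriv_def fun_eq_iff, simp)

lemma smooth_upto_0: "smooth_upto A 0 f \<longleftrightarrow> (\<forall>p\<in>A. f differentiable (at p))"
  by (simp add: smooth_upto_def)

lemma smooth_upto_Suc:
  "smooth_upto A (Suc n) f \<longleftrightarrow>
     (\<forall>p\<in>A. f differentiable (at p)) \<and> (\<forall>v. smooth_upto A n (dir_deriv v f))"
proof
  assume h: "smooth_upto A (Suc n) f"
  show "(\<forall>p\<in>A. f differentiable (at p)) \<and> (\<forall>v. smooth_upto A n (dir_deriv v f))"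
    using h[unfolded smooth_upto_def, rule_format, of "[]"]
      h[unfolded smooth_upto_def, rule_format, of "_ @ [_]"]
    by (auto simp: smooth_upto_def iter_pd_snoc)
next
  assume h: "(\<forall>p\<in>A. f differentiable (at p)) \<and> (\<forall>v. smooth_upto A n (dir_deriv v f))"
  show "smooth_upto A (Suc n) f" unfolding smooth_upto_def
  proof (intro allI impI ballI)
    fix vs :: "pt list" and p assume "length vs \<le> Suc n" "p \<in> A"
    then show "iter_pd vs f differentiable (at p)"
      using h by (cases vs rule: rev_exhaust) (auto simp: smooth_upto_def iter_pd_snoc)
  qed
qed

lemma smooth_on_iff_smooth_upto: "smooth_on A f \<longleftrightarrow> (\<forall>n. smooth_upto A n f)"
  unfolding smooth_on_def smooth_upto_def by (metis order_refl)

lemma smooth_upto_mono: "m \<le> n \<Longrightarrow> smooth_upto A n f \<Longrightarrow> smooth_upto A m f"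
  unfolding smooth_upto_def by auto

lemma smooth_upto_dir_deriv: "smooth_upto A (Suc n) f \<Longrightarrow> smooth_upto A n (dir_deriv v f)"
  using smooth_upto_Suc by blast

lemma smooth_upto_differentiable: "smooth_upto A n f \<Longrightarrow> p \<in> A \<Longrightarrow> f differentiable (at p)"
  using smooth_upto_mono[of 0 n A f] smooth_upto_0 by blast

lemma iter_pd_cong_open:
  "open A \<Longrightarrow> (\<And>q. q \<in> A \<Longrightarrow> f q = g q) \<Longrightarrow> q \<in> A \<Longrightarrow> iter_pd vs f q = iter_pd vs g q"
proof (induction vs arbitrary: q)
  case (Cons v vs)
  then have "frechet_derivative (iter_pd vs f) (at q) = frechet_derivative (iter_pd vs g) (at q)"
    by (intro frechet_derivative_cong_open[of A]) auto
  then show ?case by simp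
qed simp

lemma smooth_upto_cong_open:
  assumes "open A" "smooth_upto A n f" "\<And>q. q \<in> A \<Longrightarrow> f q = g q"
  shows "smooth_upto A n g"
  unfolding smooth_upto_def
proof (intro allI impI ballI)
  fix vs :: "pt list" and p assume "length vs \<le> n" "p \<in> A"
  then have "iter_pd vs f differentiable (at p)"
    using assms(2) unfolding smooth_upto_def by blast
  moreover have "\<And>q. q \<in> A \<Longrightarrow> iter_pd vs f q = iter_pd vs g q"
    using iter_pd_cong_open[OF assms(1)] assms(3) by blast
  ultimately show "iter_pd vs g differentiable (at p)"
    using has_derivative_transform_within_open[OF _ assms(1) \<open>p \<in> A\<close>]
    unfolding differentiable_def by metis
qed

lemma smooth_upto_const: "smooth_upto A n (\<lambda>q. c)"
proof -
  have "dir_deriv v (\<lambda>q. c) = (\<lambda>q. 0)" for v c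
    by (simp add: fun_eq_iff)
  then show ?thesis
    by (induction n arbitrary: c) (simp_all add: smooth_upto_Suc smooth_upto_0)
qed

lemma smooth_upto_snd_nth: "smooth_upto A n (\<lambda>q. snd q $ k)"
proof (cases n)
  case (Suc m)
  have "dir_deriv v (\<lambda>q. snd q $ k) = (\<lambda>p. snd v $ k)" for v
    by (simp add: fun_eq_iff dir_deriv_snd_nth)
  with Suc show ?thesis
    by (simp add: smooth_upto_Suc differentiable_snd_nth smooth_upto_const)
qed (simp add: smooth_upto_0 differentiable_snd_nth)

lemma smooth_upto_SucI:
  assumes "open A" and "\<And>p. p \<in> A \<Longrightarrow> f differentiable (at p)"
    and "\<And>v. smooth_upto A n (f' v)" and "\<And>v q. q \<in> A \<Longrightarrow> f' v q = dir_deriv v f q"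
  shows "smooth_upto A (Suc n) f"
  unfolding smooth_upto_Suc
  using assms(2) smooth_upto_cong_open[OF assms(1,3) assms(4)] by blast

lemma smooth_upto_add:
  assumes "open A" "smooth_upto A n f" "smooth_upto A n g"
  shows "smooth_upto A n (\<lambda>q. f q + g q)"
  using assms(2,3)
proof (induction n arbitrary: f g)
  case (Suc n)
  note d = smooth_upto_differentiable[OF Suc.prems(1)] smooth_upto_differentiable[OF Suc.prems(2)]
  show ?case
  proof (rule smooth_upto_SucI[OF \<open>open A\<close>])
    show "(\<lambda>q. f q + g q) differentiable (at p)" if "p \<in> A" for p
      using d that by (intro differentiable_add)
    show "smooth_upto A n (\<lambda>q. dir_deriv v f q + dir_deriv v g q)" for v
      using Suc by (simp add: smooth_upto_dir_deriv)
    show "dir_deriv v f q + dir_deriv v g q = dir_deriv v (\<lambda>q. f q + g q) q" if "q \<in> A" for v q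
      using d that by (simp add: dir_deriv_add)
  qed
qed (auto simp: smooth_upto_0)

lemma smooth_upto_minus:
  assumes "open A" "smooth_upto A n f"
  shows "smooth_upto A n (\<lambda>q. - f q)"
  using assms(2)
proof (induction n arbitrary: f)
  case (Suc n)
  note d = smooth_upto_differentiable[OF Suc.prems]
  show ?case
  proof (rule smooth_upto_SucI[OF \<open>open A\<close>])
    show "(\<lambda>q. - f q) differentiable (at p)" if "p \<in> A" for p
      using d that by (intro differentiable_minus)
    show "smooth_upto A n (\<lambda>q. - dir_deriv v f q)" for v
      using Suc by (simp add: smooth_upto_dir_deriv)
    show "- dir_deriv v f q = dir_deriv v (\<lambda>q. - f q) q" if "q \<in> A" for v q
      using d that by (simp add: dir_deriv_minus)
  qed
qed (auto simp: smooth_upto_0)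

lemma smooth_upto_mult:
  assumes "open A" "smooth_upto A n f" "smooth_upto A n g"
  shows "smooth_upto A n (\<lambda>q. f q * g q)"
  using assms(2,3)
proof (induction n arbitrary: f g)
  case (Suc n)
  note d = smooth_upto_differentiable[OF Suc.prems(1)] smooth_upto_differentiable[OF Suc.prems(2)]
  note lower = smooth_upto_mono[of n "Suc n", OF _ Suc.prems(1)]
    smooth_upto_mono[of n "Suc n", OF _ Suc.prems(2)]
  show ?case
  proof (rule smooth_upto_SucI[OF \<open>open A\<close>])
    show "(\<lambda>q. f q * g q) differentiable (at p)" if "p \<in> A" for p
      using d that by (intro differentiable_mult)
    show "smooth_upto A n (\<lambda>q. dir_deriv v f q * g q + f q * dir_deriv v g q)" for v
      using Suc.IH lower Suc.prems
      by (intro smooth_upto_add[OF \<open>open A\<close>]) (auto intro: smooth_upto_dir_deriv)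
    show "dir_deriv v f q * g q + f q * dir_deriv v g q = dir_deriv v (\<lambda>q. f q * g q) q"
      if "q \<in> A" for v q
      using d that by (simp add: dir_deriv_mult)
  qed
qed (auto simp: smooth_upto_0)

lemma smooth_upto_exp:
  assumes "open A" "smooth_upto A n f"
  shows "smooth_upto A n (\<lambda>q. exp (f q))"
  using assms(2)
proof (induction n arbitrary: f)
  case (Suc n)
  note d = smooth_upto_differentiable[OF Suc.prems]
  show ?case
  proof (rule smooth_upto_SucI[OF \<open>open A\<close>])
    show "(\<lambda>q. exp (f q)) differentiable (at p)" if "p \<in> A" for p
      using d that by (intro differentiable_exp_comp)
    show "smooth_upto A n (\<lambda>q. exp (f q) * dir_deriv v f q)" for v
      using Suc smooth_upto_mono[of n "Suc n"]
      by (intro smooth_upto_mult[OF \<open>open A\<close>]) (auto intro: smooth_upto_dir_deriv)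
    show "exp (f q) * dir_deriv v f q = dir_deriv v (\<lambda>q. exp (f q)) q" if "q \<in> A" for v q
      using d that by (simp add: dir_deriv_exp)
  qed
qed (auto simp: smooth_upto_0 differentiable_exp_comp)

lemma smooth_upto_inverse:
  assumes "open A" "smooth_upto A n f" "\<And>q. q \<in> A \<Longrightarrow> f q \<noteq> 0"
  shows "smooth_upto A n (\<lambda>q. inverse (f q))"
  using assms(2,3)
proof (induction n arbitrary: f)
  case (Suc n)
  note d = smooth_upto_differentiable[OF Suc.prems(1)]
  have inv: "smooth_upto A n (\<lambda>q. inverse (f q))"
    using Suc.IH smooth_upto_mono[of n "Suc n", OF _ Suc.prems(1)] Suc.prems(2) by simp
  show ?case
  proof (rule smooth_upto_SucI[OF \<open>open A\<close>])
    show "(\<lambda>q. inverse (f q)) differentiable (at p)" if "p \<in> A" for p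
      using d[OF that] Suc.prems(2)[OF that] by (rule differentiable_inverse)
    show "smooth_upto A n (\<lambda>q. - (dir_deriv v f q * (inverse (f q) * inverse (f q))))" for v
      using Suc.prems inv
      by (intro smooth_upto_minus smooth_upto_mult \<open>open A\<close> smooth_upto_dir_deriv)
    show "- (dir_deriv v f q * (inverse (f q) * inverse (f q))) = dir_deriv v (\<lambda>q. inverse (f q)) q"
      if "q \<in> A" for v q
      using d[OF that] Suc.prems(2)[OF that]
      by (subst dir_deriv_inverse) (simp_all add: power2_eq_square field_simps)
  qed
qed (auto simp: smooth_upto_0)

lemma smooth_upto_sum:
  assumes "open A" and "finite S" and "\<And>i. i \<in> S \<Longrightarrow> smooth_upto A n (f i)"
  shows "smooth_upto A n (\<lambda>q. \<Sum>i\<in>S. f i q)"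
  using assms(2,3)
  by (induction S rule: finite_induct) (auto intro: smooth_upto_add[OF \<open>open A\<close>] smooth_upto_const)

lemma smooth_on_dir_deriv: "smooth_on A f \<Longrightarrow> smooth_on A (dir_deriv v f)"
  unfolding smooth_on_iff_smooth_upto using smooth_upto_dir_deriv by blast

lemma smooth_on_dX: "smooth_on A f \<Longrightarrow> smooth_on A (dX i f)"
  unfolding dX_eq_dir_deriv by (rule smooth_on_dir_deriv)

lemma smooth_on_dY: "smooth_on A f \<Longrightarrow> smooth_on A (dY i f)"
  unfolding dY_eq_dir_deriv by (rule smooth_on_dir_deriv)

lemma smooth_on_differentiable: "smooth_on A f \<Longrightarrow> p \<in> A \<Longrightarrow> f differentiable (at p)"
  unfolding smooth_on_iff_smooth_upto using smooth_upto_differentiable by blast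

lemma smooth_on_const: "smooth_on A (\<lambda>q. c)"
  unfolding smooth_on_iff_smooth_upto using smooth_upto_const by blast

lemma smooth_on_snd_nth: "smooth_on A (\<lambda>q. snd q $ k)"
  unfolding smooth_on_iff_smooth_upto using smooth_upto_snd_nth by blast

lemma smooth_on_diff:
  "open A \<Longrightarrow> smooth_on A f \<Longrightarrow> smooth_on A g \<Longrightarrow> smooth_on A (\<lambda>q. f q - g q)"
  unfolding smooth_on_iff_smooth_upto
  using smooth_upto_add[of A _ f "\<lambda>q. - g q"] smooth_upto_minus by simp

lemma smooth_on_minus: "open A \<Longrightarrow> smooth_on A f \<Longrightarrow> smooth_on A (\<lambda>q. - f q)"
  unfolding smooth_on_iff_smooth_upto using smooth_upto_minus by blast

lemma smooth_on_mult:
  "open A \<Longrightarrow> smooth_on A f \<Longrightarrow> smooth_on A g \<Longrightarrow> smooth_on A (\<lambda>q. f q * g q)"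
  unfolding smooth_on_iff_smooth_upto using smooth_upto_mult by blast

lemma smooth_on_exp: "open A \<Longrightarrow> smooth_on A f \<Longrightarrow> smooth_on A (\<lambda>q. exp (f q))"
  unfolding smooth_on_iff_smooth_upto using smooth_upto_exp by blast

lemma smooth_on_inverse:
  "open A \<Longrightarrow> smooth_on A f \<Longrightarrow> (\<And>q. q \<in> A \<Longrightarrow> f q \<noteq> 0) \<Longrightarrow> smooth_on A (\<lambda>q. inverse (f q))"
  unfolding smooth_on_iff_smooth_upto using smooth_upto_inverse by blast

lemma smooth_on_sum:
  "open A \<Longrightarrow> finite S \<Longrightarrow> (\<And>i. i \<in> S \<Longrightarrow> smooth_on A (f i)) \<Longrightarrow>
   smooth_on A (\<lambda>q. \<Sum>i\<in>S. f i q)"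
  unfolding smooth_on_iff_smooth_upto using smooth_upto_sum by blast

lemma smooth_on_cong_open:
  "open A \<Longrightarrow> smooth_on A f \<Longrightarrow> (\<And>q. q \<in> A \<Longrightarrow> f q = g q) \<Longrightarrow> smooth_on A g"
  unfolding smooth_on_iff_smooth_upto using smooth_upto_cong_open by blast

lemma smooth_on_power2: "open A \<Longrightarrow> smooth_on A f \<Longrightarrow> smooth_on A (\<lambda>q. (f q)\<^sup>2)"
  using smooth_on_mult[of A f f] by (simp add: power2_eq_square)

section \<open>Symmetry of second derivatives\<close>

lemma mean_value_dir_deriv:
  fixes f :: "pt \<Rightarrow> real"
  assumes h: "0 < h"
    and d: "\<And>\<tau>. 0 \<le> \<tau> \<Longrightarrow> \<tau> \<le> h \<Longrightarrow> f differentiable (at (x + \<tau> *\<^sub>R v))"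
  shows "\<exists>\<tau>\<in>{0<..<h}. f (x + h *\<^sub>R v) - f x = h * dir_deriv v f (x + \<tau> *\<^sub>R v)"
proof -
  have "\<exists>\<tau>\<in>{0<..<h}. (\<lambda>t. f (x + t *\<^sub>R v)) h - (\<lambda>t. f (x + t *\<^sub>R v)) 0
        = (\<lambda>t s. s * dir_deriv v f (x + t *\<^sub>R v)) \<tau> (h - 0)"
  proof (rule mvt_simple[OF h])
    fix t assume t: "0 \<le> t" "t \<le> h"
    have "((\<lambda>t. x + t *\<^sub>R v) has_derivative (\<lambda>s. s *\<^sub>R v)) (at t)"
      using has_derivative_add[OF has_derivative_const[of x]
          has_derivative_scaleR_left[OF has_derivative_ident, of v]]
      by simp
    from has_derivative_compose[OF this has_derivative_dir_deriv[OF d[OF t]]]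
    show "((\<lambda>t. f (x + t *\<^sub>R v)) has_derivative (\<lambda>s. s * dir_deriv v f (x + t *\<^sub>R v)))
        (at t within {0..h})"
      using dir_deriv_scaleR_dir[OF d[OF t]] has_derivative_at_withinI by fastforce
  qed
  then show ?thesis by simp
qed

lemma second_difference_mean_value:
  fixes f :: "pt \<Rightarrow> real"
  assumes h: "0 < h"
    and box: "\<And>s t. 0 \<le> s \<Longrightarrow> s \<le> h \<Longrightarrow> 0 \<le> t \<Longrightarrow> t \<le> h \<Longrightarrow> p + s *\<^sub>R u + t *\<^sub>R w \<in> A"
    and df: "\<And>q. q \<in> A \<Longrightarrow> f differentiable (at q)"
    and dfw: "\<And>q. q \<in> A \<Longrightarrow> dir_deriv w f differentiable (at q)"
  shows "\<exists>s\<in>{0<..<h}. \<exists>t\<in>{0<..<h}.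
    f (p + h *\<^sub>R u + h *\<^sub>R w) - f (p + h *\<^sub>R u) - f (p + h *\<^sub>R w) + f p
      = h * h * dir_deriv u (dir_deriv w f) (p + s *\<^sub>R u + t *\<^sub>R w)"
proof -
  define g where "g = (\<lambda>q. f (q + h *\<^sub>R u) - f q)"
  have g: "g differentiable (at (p + t *\<^sub>R w))
      \<and> dir_deriv w g (p + t *\<^sub>R w) = dir_deriv w f (p + t *\<^sub>R w + h *\<^sub>R u) - dir_deriv w f (p + t *\<^sub>R w)"
    if "0 \<le> t" "t \<le> h" for t
  proof -
    have "p + t *\<^sub>R w + h *\<^sub>R u \<in> A" "p + t *\<^sub>R w \<in> A"
      using box[of h t] box[of 0 t] that h by (simp_all add: algebra_simps)
    with df dir_deriv_translate[of f "p + t *\<^sub>R w" "h *\<^sub>R u"] show ?thesis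
      unfolding g_def by (auto simp: dir_deriv_diff)
  qed
  obtain t where t: "t \<in> {0<..<h}" "g (p + h *\<^sub>R w) - g p = h * dir_deriv w g (p + t *\<^sub>R w)"
    using mean_value_dir_deriv[OF h, of g p w] g by blast
  have "\<exists>s\<in>{0<..<h}. dir_deriv w f (p + t *\<^sub>R w + h *\<^sub>R u) - dir_deriv w f (p + t *\<^sub>R w)
      = h * dir_deriv u (dir_deriv w f) (p + t *\<^sub>R w + s *\<^sub>R u)"
  proof (rule mean_value_dir_deriv[OF h])
    fix s assume "0 \<le> s" "s \<le> h"
    then have "p + t *\<^sub>R w + s *\<^sub>R u \<in> A" using box[of s t] t(1) by (simp add: algebra_simps)
    then show "dir_deriv w f differentiable (at (p + t *\<^sub>R w + s *\<^sub>R u))" by (rule dfw)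
  qed
  then obtain s where "s \<in> {0<..<h}" "dir_deriv w f (p + t *\<^sub>R w + h *\<^sub>R u) - dir_deriv w f (p + t *\<^sub>R w)
      = h * dir_deriv u (dir_deriv w f) (p + t *\<^sub>R w + s *\<^sub>R u)" by blast
  with t g[of t] show ?thesis
    unfolding g_def by (intro bexI[of _ s] bexI[of _ t]) (auto simp: algebra_simps)
qed

lemma small_box_in_ball:
  fixes p u w :: "'a::real_normed_vector"
  assumes "d > 0"
  obtains h :: real where "h > 0"
    and "\<And>s t. 0 \<le> s \<Longrightarrow> s \<le> h \<Longrightarrow> 0 \<le> t \<Longrightarrow> t \<le> h \<Longrightarrow> p + s *\<^sub>R u + t *\<^sub>R w \<in> ball p d"
proof
  define h where "h = d / (2 * (norm u + norm w + 1))"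
  have n: "norm u + norm w + 1 > 0" by (simp add: add_nonneg_pos)
  then show "h > 0" using assms unfolding h_def by simp
  fix s t :: real assume st: "0 \<le> s" "s \<le> h" "0 \<le> t" "t \<le> h"
  have "norm (s *\<^sub>R u + t *\<^sub>R w) \<le> s * norm u + t * norm w"
    using norm_triangle_ineq[of "s *\<^sub>R u" "t *\<^sub>R w"] st by simp
  also have "\<dots> \<le> h * (norm u + norm w + 1)"
    using st by (simp add: distrib_left add_mono mult_right_mono add_increasing2 \<open>h > 0\<close>
        less_imp_le)
  also have "\<dots> = d / 2" using n unfolding h_def by (simp add: field_simps)
  also have "\<dots> < d" using assms by simp
  finally have "dist (p + s *\<^sub>R u + t *\<^sub>R w) p < d" by (simp add: dist_norm add.assoc)
  then show "p + s *\<^sub>R u + t *\<^sub>R w \<in> ball p d" by (simp add: dist_commute)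
qed

lemma second_difference_near:
  fixes f :: "pt \<Rightarrow> real"
  assumes A: "open A" and p: "p \<in> A" and f: "smooth_on A f" and d: "d > 0"
  obtains h q1 q2 where "h > 0" "dist q1 p < d" "dist q2 p < d"
    "f (p + h *\<^sub>R u + h *\<^sub>R w) - f (p + h *\<^sub>R u) - f (p + h *\<^sub>R w) + f p
       = h * h * dir_deriv u (dir_deriv w f) q1"
    "f (p + h *\<^sub>R u + h *\<^sub>R w) - f (p + h *\<^sub>R u) - f (p + h *\<^sub>R w) + f p
       = h * h * dir_deriv w (dir_deriv u f) q2"
proof -
  obtain d0 where d0: "d0 > 0" "ball p d0 \<subseteq> A"
    using A p open_contains_ball by blast
  obtain h where h: "h > 0" and box: "\<And>s t. 0 \<le> s \<Longrightarrow> s \<le> h \<Longrightarrow> 0 \<le> t \<Longrightarrow> t \<le> h \<Longrightarrow>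
      p + s *\<^sub>R u + t *\<^sub>R w \<in> ball p (min d0 d)"
    using small_box_in_ball[of "min d0 d" p u w] d0 d by auto
  have inA: "p + s *\<^sub>R u + t *\<^sub>R w \<in> A" "p + t *\<^sub>R w + s *\<^sub>R u \<in> A"
    if "0 \<le> s" "s \<le> h" "0 \<le> t" "t \<le> h" for s t
  proof -
    have "p + s *\<^sub>R u + t *\<^sub>R w \<in> A" using box[OF that] d0(2) by auto
    then show "p + s *\<^sub>R u + t *\<^sub>R w \<in> A" "p + t *\<^sub>R w + s *\<^sub>R u \<in> A"
      by (simp_all add: algebra_simps)
  qed
  have df: "f differentiable (at q)" "dir_deriv v f differentiable (at q)" if "q \<in> A" for q v
    using smooth_on_differentiable[OF f that] smooth_on_differentiable[OF smooth_on_dir_deriv[OF f] that]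
    by auto
  obtain s1 t1 where st1: "s1 \<in> {0<..<h}" "t1 \<in> {0<..<h}" and q1:
    "f (p + h *\<^sub>R u + h *\<^sub>R w) - f (p + h *\<^sub>R u) - f (p + h *\<^sub>R w) + f p
       = h * h * dir_deriv u (dir_deriv w f) (p + s1 *\<^sub>R u + t1 *\<^sub>R w)"
    using second_difference_mean_value[OF h, of p u w A f] inA(1) df by blast
  obtain s2 t2 where st2: "s2 \<in> {0<..<h}" "t2 \<in> {0<..<h}" and q2:
    "f (p + h *\<^sub>R w + h *\<^sub>R u) - f (p + h *\<^sub>R w) - f (p + h *\<^sub>R u) + f p
       = h * h * dir_deriv w (dir_deriv u f) (p + s2 *\<^sub>R w + t2 *\<^sub>R u)"
    using second_difference_mean_value[OF h, of p w u A f] inA(2) df by blast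
  show thesis
  proof (rule that[OF h])
    show "dist (p + s1 *\<^sub>R u + t1 *\<^sub>R w) p < d" "dist (p + s2 *\<^sub>R w + t2 *\<^sub>R u) p < d"
      using box[of s1 t1] box[of t2 s2] st1 st2 by (auto simp: dist_commute algebra_simps)
    show "f (p + h *\<^sub>R u + h *\<^sub>R w) - f (p + h *\<^sub>R u) - f (p + h *\<^sub>R w) + f p
       = h * h * dir_deriv w (dir_deriv u f) (p + s2 *\<^sub>R w + t2 *\<^sub>R u)"
      using q2 by (simp add: algebra_simps)
  qed (rule q1)
qed

lemma dir_deriv_commute:
  assumes A: "open A" and p: "p \<in> A" and f: "smooth_on A f"
  shows "dir_deriv u (dir_deriv w f) p = dir_deriv w (dir_deriv u f) p"
proof (rule ccontr)
  define g1 where "g1 = dir_deriv u (dir_deriv w f)"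
  define g2 where "g2 = dir_deriv w (dir_deriv u f)"
  define e where "e = \<bar>g1 p - g2 p\<bar> / 2"
  assume "dir_deriv u (dir_deriv w f) p \<noteq> dir_deriv w (dir_deriv u f) p"
  then have e: "e > 0" by (simp add: e_def g1_def g2_def)
  have "continuous (at p) g1" "continuous (at p) g2"
    unfolding g1_def g2_def
    using smooth_on_differentiable[OF smooth_on_dir_deriv[OF smooth_on_dir_deriv[OF f]] p]
    by (simp_all add: differentiable_imp_continuous_within)
  then obtain d1 d2 where d1: "d1 > 0" "\<And>q. dist q p < d1 \<Longrightarrow> dist (g1 q) (g1 p) < e"
    and d2: "d2 > 0" "\<And>q. dist q p < d2 \<Longrightarrow> dist (g2 q) (g2 p) < e"
    using e unfolding continuous_at_eps_delta by metis
  obtain h q1 q2 where h: "h > 0" and q: "dist q1 p < min d1 d2" "dist q2 p < min d1 d2"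
    and "h * h * g1 q1 = h * h * g2 q2"
    using second_difference_near[OF A p f, of "min d1 d2" u w] d1(1) d2(1)
    unfolding g1_def g2_def by (metis min_less_iff_conj)
  then have "g1 q1 = g2 q2" by simp
  moreover have "dist (g1 q1) (g1 p) < e" "dist (g2 q2) (g2 p) < e"
    using q d1(2) d2(2) by auto
  ultimately have "\<bar>g1 p - g2 p\<bar> < 2 * e" by (simp add: dist_real_def)
  then show False by (simp add: e_def)
qed

lemma dX_dY_commute: "open A \<Longrightarrow> p \<in> A \<Longrightarrow> smooth_on A f \<Longrightarrow> dX i (dY j f) p = dY j (dX i f) p"
  unfolding dX_eq_dir_deriv dY_eq_dir_deriv by (rule dir_deriv_commute)

lemma dY_dY_commute: "open A \<Longrightarrow> p \<in> A \<Longrightarrow> smooth_on A f \<Longrightarrow> dY i (dY j f) p = dY j (dY i f) p"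
  unfolding dY_eq_dir_deriv by (rule dir_deriv_commute)

section \<open>Positive homogeneity in the fibre variable\<close>

definition conic :: "pt set \<Rightarrow> bool" where
  "conic A \<longleftrightarrow> (\<forall>x y. (x, y) \<in> A \<longrightarrow> (\<forall>t>0. (x, t *\<^sub>R y) \<in> A))"

text \<open>Real degrees are needed, since vertical derivatives lower the degree below zero.\<close>

definition pos_homogeneous :: "pt set \<Rightarrow> real \<Rightarrow> (pt \<Rightarrow> real) \<Rightarrow> bool" where
  "pos_homogeneous A r f \<longleftrightarrow> (\<forall>x y. (x, y) \<in> A \<longrightarrow> (\<forall>t>0. f (x, t *\<^sub>R y) = t powr r * f (x, y)))"

lemma pos_homogeneousI:
  "(\<And>x y t. (x, y) \<in> A \<Longrightarrow> t > 0 \<Longrightarrow> f (x, t *\<^sub>R y) = t powr r * f (x, y)) \<Longrightarrow>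
   pos_homogeneous A r f"
  unfolding pos_homogeneous_def by blast

lemma pos_homogeneousD:
  "pos_homogeneous A r f \<Longrightarrow> (x, y) \<in> A \<Longrightarrow> t > 0 \<Longrightarrow> f (x, t *\<^sub>R y) = t powr r * f (x, y)"
  unfolding pos_homogeneous_def by blast

lemma pos_homogeneous_if_homog_on: "homog_on A n f \<Longrightarrow> pos_homogeneous A (real n) f"
  unfolding pos_homogeneous_def homog_on_def by (auto simp: powr_realpow)

lemma pos_homogeneous_snd_nth: "pos_homogeneous A 1 (\<lambda>q. snd q $ k)"
  by (rule pos_homogeneousI) simp

lemma pos_homogeneous_diff:
  "pos_homogeneous A r f \<Longrightarrow> pos_homogeneous A r g \<Longrightarrow> pos_homogeneous A r (\<lambda>q. f q - g q)"
  unfolding pos_homogeneous_def by (simp add: right_diff_distrib)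

lemma pos_homogeneous_cmult: "pos_homogeneous A r f \<Longrightarrow> pos_homogeneous A r (\<lambda>q. c * f q)"
  unfolding pos_homogeneous_def by simp

lemma pos_homogeneous_mult:
  "pos_homogeneous A r f \<Longrightarrow> pos_homogeneous A s g \<Longrightarrow> u = r + s \<Longrightarrow>
   pos_homogeneous A u (\<lambda>q. f q * g q)"
  unfolding pos_homogeneous_def by (simp add: powr_add)

lemma pos_homogeneous_exp: "pos_homogeneous A 0 f \<Longrightarrow> pos_homogeneous A 0 (\<lambda>q. exp (f q))"
  unfolding pos_homogeneous_def by simp

lemma pos_homogeneous_sum:
  "finite S \<Longrightarrow> (\<And>i. i \<in> S \<Longrightarrow> pos_homogeneous A r (f i)) \<Longrightarrow>
   pos_homogeneous A r (\<lambda>q. \<Sum>i\<in>S. f i q)"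
  unfolding pos_homogeneous_def by (simp add: sum_distrib_left)

lemma pos_homogeneous_cong:
  "conic A \<Longrightarrow> pos_homogeneous A r f \<Longrightarrow> (\<And>q. q \<in> A \<Longrightarrow> f q = g q) \<Longrightarrow> pos_homogeneous A r g"
  unfolding pos_homogeneous_def conic_def by metis

lemma dir_deriv_fibre_scale:
  assumes A: "open A" "conic A"
    and f: "pos_homogeneous A r f" "\<And>p. p \<in> A \<Longrightarrow> f differentiable (at p)"
    and xy: "(x, y) \<in> A" and t: "t > 0"
  shows "dir_deriv (fst v, t *\<^sub>R snd v) f (x, t *\<^sub>R y) = t powr r * dir_deriv v f (x, y)"
proof -
  let ?s = "\<lambda>q::pt. (fst q, t *\<^sub>R snd q)"
  have "bounded_linear ?s"
    by (intro bounded_linear_Pair bounded_linear_fst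
        bounded_linear_compose[OF bounded_linear_scaleR_right bounded_linear_snd])
  moreover have "?s (x, y) \<in> A" using A(2) xy t unfolding conic_def by simp
  ultimately have "dir_deriv v (\<lambda>q. f (?s q)) (x, y) = dir_deriv (?s v) f (?s (x, y))"
    using f(2) by (intro dir_deriv_comp_linear) auto
  moreover have "dir_deriv v (\<lambda>q. f (?s q)) (x, y) = dir_deriv v (\<lambda>q. t powr r * f q) (x, y)"
    using pos_homogeneousD[OF f(1) _ t, of "fst q" "snd q" for q]
    by (intro dir_deriv_cong_open[OF A(1) xy]) simp
  ultimately show ?thesis
    using dir_deriv_cmult[OF f(2)[OF xy]] by simp
qed

lemma pos_homogeneous_dY:
  assumes A: "open A" "conic A"
    and f: "pos_homogeneous A r f" "\<And>p. p \<in> A \<Longrightarrow> f differentiable (at p)"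
  shows "pos_homogeneous A (r - 1) (dY j f)"
proof (rule pos_homogeneousI)
  fix x y and t :: real assume xy: "(x, y) \<in> A" and t: "t > 0"
  have "(x, t *\<^sub>R y) \<in> A" using A(2) xy t unfolding conic_def by blast
  then have "t * dY j f (x, t *\<^sub>R y) = t powr r * dY j f (x, y)"
    using dir_deriv_fibre_scale[OF A f xy t, of "(0, axis j 1)"]
      dir_deriv_scaleR_dir[OF f(2), of _ t "(0, axis j 1)"]
    by (simp add: dY_eq_dir_deriv)
  then show "dY j f (x, t *\<^sub>R y) = t powr (r - 1) * dY j f (x, y)"
    using t by (simp add: powr_diff field_simps)
qed

lemma pos_homogeneous_dX:
  assumes "open A" "conic A"
    and "pos_homogeneous A r f" "\<And>p. p \<in> A \<Longrightarrow> f differentiable (at p)"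
  shows "pos_homogeneous A r (dX j f)"
  using dir_deriv_fibre_scale[OF assms, of _ _ _ "(axis j 1, 0)"]
  by (intro pos_homogeneousI) (simp add: dX_eq_dir_deriv)

lemma euler_pos_homogeneous:
  assumes "conic A" and f: "pos_homogeneous A r f" and fd: "f differentiable (at (x, y))"
    and xy: "(x, y) \<in> A"
  shows "(\<Sum>j\<in>UNIV. y $ j * dY j f (x, y)) = r * f (x, y)"
proof -
  have "((\<lambda>t. (x, t *\<^sub>R y)) has_derivative (\<lambda>s. (0, s *\<^sub>R y))) (at 1)"
    using has_derivative_Pair[OF has_derivative_const[of x]
        has_derivative_scaleR_left[OF has_derivative_ident, of y]]
    by simp
  from has_derivative_compose[OF this has_derivative_dir_deriv[of f "(x, 1 *\<^sub>R y)"]]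
  have "((\<lambda>t. f (x, t *\<^sub>R y)) has_derivative (\<lambda>s. dir_deriv (0, s *\<^sub>R y) f (x, y))) (at 1)"
    using fd by simp
  moreover have "(\<lambda>s. dir_deriv (0, s *\<^sub>R y) f (x, y)) = (*) (dir_deriv (0, y) f (x, y))"
    using dir_deriv_scaleR_dir[OF fd, of _ "(0, y)"] by (simp add: fun_eq_iff mult.commute)
  ultimately have g: "((\<lambda>t. f (x, t *\<^sub>R y)) has_field_derivative dir_deriv (0, y) f (x, y)) (at 1)"
    unfolding has_field_derivative_def by (simp only:)
  have "((\<lambda>t. t powr r * f (x, y)) has_field_derivative dir_deriv (0, y) f (x, y)) (at 1)"
    by (rule has_field_derivative_transform_within_open[OF g, of "{0<..}"])
      (use pos_homogeneousD[OF f xy] in auto)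
  moreover have "((\<lambda>t. t powr r * f (x, y)) has_field_derivative r * f (x, y)) (at 1)"
    using DERIV_cmult_right[OF has_real_derivative_powr[of 1 r], of "f (x, y)"] by simp
  ultimately have "dir_deriv (0, y) f (x, y) = r * f (x, y)" using DERIV_unique by blast
  then show ?thesis using dir_deriv_vertical[OF fd] by simp
qed

lemma pos_homogeneous_2_eqI:
  assumes A: "open A" "conic A"
    and s: "smooth_on A f" "smooth_on A g" and h: "pos_homogeneous A 2 f" "pos_homogeneous A 2 g"
    and eq: "\<And>q j k. q \<in> A \<Longrightarrow> dY k (dY j f) q = dY k (dY j g) q"
    and p: "p \<in> A"
  shows "f p = g p"
proof -
  define d where "d = (\<lambda>q. f q - g q)"
  have sd: "smooth_on A d" unfolding d_def by (intro smooth_on_diff A s)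
  have hd: "pos_homogeneous A 2 d" unfolding d_def by (intro pos_homogeneous_diff h)
  have dY_d: "dY j d q = dY j f q - dY j g q" if "q \<in> A" for j q
    unfolding d_def using s that by (intro dY_diff smooth_on_differentiable)
  have "dY k (dY j d) q = dY k (dY j f) q - dY k (dY j g) q" if q: "q \<in> A" for j k q
  proof -
    have "dY k (dY j d) q = dY k (\<lambda>q. dY j f q - dY j g q) q"
      by (rule dY_cong_open[OF A(1) q]) (rule dY_d)
    also have "\<dots> = dY k (dY j f) q - dY k (dY j g) q"
      using s q by (intro dY_diff smooth_on_differentiable smooth_on_dY)
    finally show ?thesis .
  qed
  then have ddd: "dY k (dY j d) q = 0" if "q \<in> A" for j k q using eq that by simp
  obtain x y where pxy: "p = (x, y)" by (cases p)
  have "pos_homogeneous A (2 - 1) (dY j d)" for j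
    using A hd smooth_on_differentiable[OF sd] by (rule pos_homogeneous_dY)
  then have "(\<Sum>k\<in>UNIV. y $ k * dY k (dY j d) (x, y)) = (2 - 1) * dY j d (x, y)" for j
    using p pxy A smooth_on_differentiable[OF smooth_on_dY[OF sd]]
    by (intro euler_pos_homogeneous) auto
  then have "dY j d (x, y) = 0" for j using ddd p pxy by simp
  moreover have "(\<Sum>j\<in>UNIV. y $ j * dY j d (x, y)) = 2 * d (x, y)"
    using p pxy A hd smooth_on_differentiable[OF sd] by (intro euler_pos_homogeneous) auto
  ultimately show ?thesis using pxy by (simp add: d_def)
qed

section \<open>Two-by-two linear algebra\<close>

lemma inner_vec2: "(u::real^2) \<bullet> v = u$1 * v$1 + u$2 * v$2"
  by (simp add: inner_vec_def sum_2)

lemma inner_mat_vec2: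
  fixes N :: "real^2^2"
  shows "u \<bullet> (N *v v) = u$1 * N$1$1 * v$1 + u$1 * N$1$2 * v$2 + u$2 * N$2$1 * v$1 + u$2 * N$2$2 * v$2"
  by (simp add: inner_vec2 matrix_vector_mult_def sum_2 algebra_simps)

lemma eq_0_if_det_nonzero: "det (N::real^2^2) \<noteq> 0 \<Longrightarrow> N *v v = 0 \<Longrightarrow> v = 0"
  using matrix_left_invertible_ker[of N] invertible_left_inverse[of N] invertible_det_nz[of N] by blast

lemma matrix_inv_mult:
  fixes M :: "real^2^2"
  assumes "det M \<noteq> 0"
  shows "M ** matrix_inv M = mat 1" "matrix_inv M ** M = mat 1"
proof -
  have "\<exists>M'. M ** M' = mat 1 \<and> M' ** M = mat 1"
    using assms invertible_det_nz unfolding invertible_def by blast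
  then have "M ** matrix_inv M = mat 1 \<and> matrix_inv M ** M = mat 1"
    unfolding matrix_inv_def by (rule someI_ex)
  then show "M ** matrix_inv M = mat 1" "matrix_inv M ** M = mat 1" by auto
qed

definition adjugate2 :: "real^2^2 \<Rightarrow> 2 \<Rightarrow> 2 \<Rightarrow> real" where
  "adjugate2 M i j = (if i = 1 \<and> j = 1 then M$2$2 else if i = 1 \<and> j = 2 then - M$1$2
      else if i = 2 \<and> j = 1 then - M$2$1 else M$1$1)"

lemma matrix_inv_2:
  fixes M :: "real^2^2"
  assumes d: "det M \<noteq> 0"
  shows "matrix_inv M $ i $ j = adjugate2 M i j / det M"
proof -
  define B :: "real^2^2" where "B = (\<chi> i j. adjugate2 M i j / det M)"
  have "M$1$1 * M$2$2 - M$1$2 * M$2$1 \<noteq> 0" using d by (simp add: det_2)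
  then have B: "B ** M = mat 1"
    unfolding B_def
    by (simp add: vec_eq_iff forall_2 matrix_matrix_mult_def sum_2 mat_def adjugate2_def)
      (simp add: det_2 diff_divide_distrib[symmetric] add_divide_distrib[symmetric] algebra_simps)
  have "B = B ** (M ** matrix_inv M)" using matrix_inv_mult(1)[OF d] by simp
  also have "\<dots> = matrix_inv M" using B by (simp add: matrix_mul_assoc)
  finally have "matrix_inv M = B" by simp
  then show ?thesis unfolding B_def by simp
qed

lemma smooth_on_matrix_inv:
  fixes M :: "pt \<Rightarrow> real^2^2"
  assumes A: "open A" and M: "\<And>i j. smooth_on A (\<lambda>p. M p $ i $ j)"
    and d: "\<And>p. p \<in> A \<Longrightarrow> det (M p) \<noteq> 0"
  shows "smooth_on A (\<lambda>p. matrix_inv (M p) $ i $ j)"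
proof -
  have "smooth_on A (\<lambda>p. M p $1$1 * M p $2$2 - M p $1$2 * M p $2$1)"
    by (intro smooth_on_diff smooth_on_mult A M)
  then have det: "smooth_on A (\<lambda>p. det (M p))" by (simp add: det_2)
  have "smooth_on A (\<lambda>p. adjugate2 (M p) i j)"
    using exhaust_2[of i] exhaust_2[of j]
    by (auto simp: adjugate2_def intro!: smooth_on_minus A M)
  then have "smooth_on A (\<lambda>p. adjugate2 (M p) i j * inverse (det (M p)))"
    by (intro smooth_on_mult smooth_on_inverse A det d)
  then show ?thesis
    by (rule smooth_on_cong_open[OF A]) (simp add: matrix_inv_2 d divide_inverse)
qed

text \<open>The data of a modified Berwald frame at one point (x, y): ell and m are the covectors
  l_i = dot-partial_i F and m_i, g' is the inverse of g, and the raised vectors are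
  l^i = y / F and m^i = g^ij m_j. The assumptions on y are Euler's relations for F and F^2.\<close>

locale modified_berwald_frame =
  fixes y ell m :: "real^2" and g g' :: "real^2^2" and F eps :: real
  assumes g_frame: "\<And>i j. g$i$j = ell$i * ell$j + eps * m$i * m$j"
    and eps_cases: "eps = 1 \<or> eps = -1"
    and g_inverse: "g ** g' = mat 1"
    and F_nonzero: "F \<noteq> 0"
    and y_ell: "y \<bullet> ell = F"
    and g_y: "g *v y = F *\<^sub>R ell"
begin

definition m_raised :: "real^2" where "m_raised = g' *v m"
definition ell_raised :: "real^2" where "ell_raised = (1 / F) *\<^sub>R y"

lemma g_frame_mult: "g *v v = (ell \<bullet> v) *\<^sub>R ell + (eps * (m \<bullet> v)) *\<^sub>R m"
  by (simp add: vec_eq_iff forall_2 matrix_vector_mult_def sum_2 g_frame inner_vec2 algebra_simps)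

lemma m_y: "m \<bullet> y = 0"
proof -
  have "(g *v y) \<bullet> y = F * F + eps * ((m \<bullet> y) * (m \<bullet> y))"
    using g_frame_mult[of y] y_ell by (simp add: inner_commute algebra_simps)
  moreover have "(g *v y) \<bullet> y = F * F"
    using g_y y_ell by (simp add: inner_commute)
  ultimately have "eps * ((m \<bullet> y) * (m \<bullet> y)) = 0" by simp
  then show ?thesis using eps_cases by auto
qed

lemma g_m_raised: "g *v m_raised = m"
  unfolding m_raised_def by (simp add: matrix_vector_mul_assoc g_inverse)

lemma g_mult_inner_commute: "(g *v u) \<bullet> v = u \<bullet> (g *v v)"
  by (simp add: inner_vec2 matrix_vector_mult_def sum_2 g_frame algebra_simps)

lemma ell_m_raised: "ell \<bullet> m_raised = 0"
proof -
  have "F * (ell \<bullet> m_raised) = y \<bullet> m"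
    using g_mult_inner_commute[of y m_raised] by (simp add: g_y g_m_raised)
  then show ?thesis using m_y F_nonzero by (simp add: inner_commute)
qed

lemma m_m_raised: "m \<bullet> m_raised = eps"
proof -
  have m: "m = (eps * (m \<bullet> m_raised)) *\<^sub>R m"
    using g_frame_mult[of m_raised] by (simp add: g_m_raised ell_m_raised)
  have "m \<noteq> 0"
  proof
    assume "m = 0"
    then have "det g = 0" by (simp add: det_2 g_frame)
    moreover have "det g * det g' = 1" using g_inverse det_mul[of g g'] by simp
    ultimately show False by simp
  qed
  then have "eps * (m \<bullet> m_raised) = 1"
    using m scaleR_cancel_right[of "eps * (m \<bullet> m_raised)" m 1] by simp
  then show ?thesis using eps_cases by auto
qed

lemma ell_ell_raised: "ell \<bullet> ell_raised = 1"
  using y_ell F_nonzero by (simp add: ell_raised_def inner_commute)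

lemma m_ell_raised: "m \<bullet> ell_raised = 0"
  using m_y by (simp add: ell_raised_def)

lemma g_ell_raised: "g *v ell_raised = ell"
  using g_y F_nonzero by (simp add: ell_raised_def matrix_vector_mult_scaleR)

definition raised_frame :: "real^2^2" where
  "raised_frame = (\<chi> i a. if a = 1 then ell_raised $ i else m_raised $ i)"

lemma raised_frame_gram:
  "transpose raised_frame ** (N ** raised_frame) =
     (\<chi> a b. (if a = 1 then ell_raised else m_raised) \<bullet> (N *v (if b = 1 then ell_raised else m_raised)))"
  by (simp add: vec_eq_iff forall_2 matrix_matrix_mult_def transpose_def raised_frame_def sum_2
      inner_mat_vec2 algebra_simps)

lemma det_raised_frame_gram:
  "det raised_frame * det raised_frame * det N =
     (ell_raised \<bullet> (N *v ell_raised)) * (m_raised \<bullet> (N *v m_raised))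
       - (ell_raised \<bullet> (N *v m_raised)) * (m_raised \<bullet> (N *v ell_raised))"
proof -
  have "det raised_frame * det raised_frame * det N = det (transpose raised_frame ** (N ** raised_frame))"
    by (simp add: det_mul det_transpose)
  then show ?thesis by (simp only: raised_frame_gram det_2) simp
qed

lemma det_raised_frame_nonzero: "det raised_frame \<noteq> 0"
proof -
  have "ell_raised \<bullet> ell = 1" "m_raised \<bullet> m = eps" "ell_raised \<bullet> m = 0" "m_raised \<bullet> ell = 0"
    using ell_ell_raised m_m_raised m_ell_raised ell_m_raised by (simp_all add: inner_commute)
  then have "det raised_frame * det raised_frame * det g = eps"
    using det_raised_frame_gram[of g] by (simp add: g_ell_raised g_m_raised)
  then show ?thesis using eps_cases by auto
qed

lemma eq_0_if_frame_components_0: "ell_raised \<bullet> w = 0 \<Longrightarrow> m_raised \<bullet> w = 0 \<Longrightarrow> w = 0"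
proof -
  assume "ell_raised \<bullet> w = 0" "m_raised \<bullet> w = 0"
  then have "transpose raised_frame *v w = 0"
    by (simp add: vec_eq_iff forall_2 matrix_vector_mult_def transpose_def raised_frame_def inner_vec2 sum_2)
  moreover have "det (transpose raised_frame) \<noteq> 0"
    using det_raised_frame_nonzero by (simp add: det_transpose)
  ultimately show "w = 0" using eq_0_if_det_nonzero by blast
qed


lemma det_conformal_metric_nonzero:
  fixes dphi :: "real^2" and H N :: "real^2^2" and c :: real
  assumes c: "c \<noteq> 0"
    and y_dphi: "y \<bullet> dphi = 0" and H_y: "H *v y = - dphi" and H_symmetric: "transpose H = H"
    and N: "\<And>i j. N$i$j = c * (g$i$j + 2 * F * (dphi$i * ell$j + ell$i * dphi$j)
                                + F\<^sup>2 * (2 * dphi$i * dphi$j + H$i$j))"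
    and admissible: "F\<^sup>2 * (\<Sum>i\<in>UNIV. \<Sum>j\<in>UNIV. (H$i$j + dphi$i * dphi$j) * m_raised$i * m_raised$j)
                       + eps \<noteq> 0"
  shows "det N \<noteq> 0"
proof -
  have N_form: "u \<bullet> (N *v v) = c * (u \<bullet> (g *v v) + 2 * F * ((u \<bullet> dphi) * (ell \<bullet> v) + (u \<bullet> ell) * (dphi \<bullet> v))
      + F\<^sup>2 * (2 * (u \<bullet> dphi) * (dphi \<bullet> v) + u \<bullet> (H *v v)))" for u v
    unfolding inner_mat_vec2 N by (simp add: inner_vec2 algebra_simps)
  have "H$1$2 = H$2$1"
    using arg_cong[OF H_symmetric, of "\<lambda>M. M$1$2"] by (simp add: transpose_def)
  then have H_symm: "u \<bullet> (H *v v) = v \<bullet> (H *v u)" for u v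
    unfolding inner_mat_vec2 by (simp add: algebra_simps)
  have ell_raised_dphi: "ell_raised \<bullet> dphi = 0" "dphi \<bullet> ell_raised = 0"
    using y_dphi by (simp_all add: ell_raised_def inner_commute)
  have H_ell_raised: "u \<bullet> (H *v ell_raised) = - (u \<bullet> dphi) / F" for u
    using H_y by (simp add: ell_raised_def matrix_vector_mult_scaleR)
  define a where "a = m_raised \<bullet> dphi"
  define b where "b = m_raised \<bullet> (H *v m_raised)"
  have "(\<Sum>i\<in>UNIV. \<Sum>j\<in>UNIV. (H$i$j + dphi$i * dphi$j) * m_raised$i * m_raised$j) = a * a + b"
    unfolding a_def b_def inner_mat_vec2 by (simp add: sum_2 inner_vec2 algebra_simps)
  with admissible have ab: "F\<^sup>2 * (a * a + b) + eps \<noteq> 0" by simp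
  have inner: "ell_raised \<bullet> (g *v ell_raised) = 1" "ell_raised \<bullet> (g *v m_raised) = 0"
      "m_raised \<bullet> (g *v ell_raised) = 0" "m_raised \<bullet> (g *v m_raised) = eps"
      "ell_raised \<bullet> ell = 1" "m_raised \<bullet> ell = 0" "ell \<bullet> ell_raised = 1" "ell \<bullet> m_raised = 0"
      "dphi \<bullet> m_raised = a"
    using ell_ell_raised m_m_raised m_ell_raised ell_m_raised
    by (simp_all add: g_ell_raised g_m_raised inner_commute a_def)
  have "ell_raised \<bullet> (N *v ell_raised) = c"
    using F_nonzero by (simp add: N_form inner ell_raised_dphi H_ell_raised)
  moreover have "ell_raised \<bullet> (N *v m_raised) = c * F * a"
    using F_nonzero H_symm[of ell_raised m_raised]
    by (simp add: N_form inner ell_raised_dphi H_ell_raised a_def power2_eq_square field_simps)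
  moreover have "m_raised \<bullet> (N *v ell_raised) = c * F * a"
    using F_nonzero by (simp add: N_form inner ell_raised_dphi H_ell_raised a_def power2_eq_square field_simps)
  moreover have "m_raised \<bullet> (N *v m_raised) = c * (eps + F\<^sup>2 * (2 * a * a + b))"
    by (simp add: N_form inner a_def b_def inner_commute[of dphi])
  ultimately have "det raised_frame * det raised_frame * det N = c * c * (F\<^sup>2 * (a * a + b) + eps)"
    by (simp only: det_raised_frame_gram) (simp add: algebra_simps power2_eq_square)
  with c ab show ?thesis by auto
qed

end

section \<open>The geodesic spray of a conic pseudo-Finsler function\<close>

abbreviation sq :: "(pt \<Rightarrow> real) \<Rightarrow> pt \<Rightarrow> real" where
  "sq K \<equiv> (\<lambda>q. (K q)\<^sup>2)"

locale conic_pseudo_finsler =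
  fixes A :: "pt set" and K :: "pt \<Rightarrow> real"
  assumes open_A: "open A" and conic_A: "conic A" and smooth_K: "smooth_on A K"
    and homogeneous_K: "pos_homogeneous A 1 K"
    and K_nonzero: "\<And>p. p \<in> A \<Longrightarrow> K p \<noteq> 0"
    and gmat_nondegenerate: "\<And>p. p \<in> A \<Longrightarrow> det (gmat K p) \<noteq> 0"
begin

lemma smooth_sq: "smooth_on A (sq K)"
  by (rule smooth_on_power2[OF open_A smooth_K])

lemma homogeneous_sq: "pos_homogeneous A 2 (sq K)"
  using pos_homogeneous_mult[OF homogeneous_K homogeneous_K] by (simp add: power2_eq_square)

lemma pos_homogeneous_dY_smooth:
  "pos_homogeneous A r f \<Longrightarrow> smooth_on A f \<Longrightarrow> pos_homogeneous A (r - 1) (dY j f)"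
  using pos_homogeneous_dY[OF open_A conic_A] smooth_on_differentiable by blast

lemma pos_homogeneous_dX_smooth:
  "pos_homogeneous A r f \<Longrightarrow> smooth_on A f \<Longrightarrow> pos_homogeneous A r (dX j f)"
  using pos_homogeneous_dX[OF open_A conic_A] smooth_on_differentiable by blast

lemma euler_smooth:
  "pos_homogeneous A r f \<Longrightarrow> smooth_on A f \<Longrightarrow> (x, y) \<in> A \<Longrightarrow>
   (\<Sum>j\<in>UNIV. y $ j * dY j f (x, y)) = r * f (x, y)"
  using euler_pos_homogeneous[OF conic_A] smooth_on_differentiable by blast

lemma homogeneous_dY_sq: "pos_homogeneous A 1 (dY j (sq K))"
  using pos_homogeneous_dY_smooth[OF homogeneous_sq smooth_sq] by simp

lemma dY_sq_eq_mult: "q \<in> A \<Longrightarrow> dY j (sq K) q = 2 * K q * dY j K q"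
  using dY_power2 smooth_on_differentiable[OF smooth_K] by blast

lemma gmat_eq_dY: "p \<in> A \<Longrightarrow> gmat K p $ i $ j = dY i K p * dY j K p + K p * dY i (dY j K) p"
proof -
  assume p: "p \<in> A"
  have "dY i (dY j (sq K)) p = dY i (\<lambda>q. 2 * (K q * dY j K q)) p"
    by (rule dY_cong_open[OF open_A p]) (simp add: dY_sq_eq_mult)
  also have "\<dots> = 2 * (dY i K p * dY j K p + K p * dY i (dY j K) p)"
    using smooth_on_differentiable[OF smooth_K p] smooth_on_differentiable[OF smooth_on_dY[OF smooth_K] p]
    by (simp add: dY_cmult dY_mult)
  finally show ?thesis by (simp add: gmat_def)
qed

lemma smooth_gmat: "smooth_on A (\<lambda>p. gmat K p $ i $ j)"
proof -
  have "smooth_on A (\<lambda>p. dY i (dY j (sq K)) p * inverse 2)"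
    by (intro smooth_on_mult open_A smooth_on_dY smooth_sq smooth_on_const)
  then show ?thesis by (rule smooth_on_cong_open[OF open_A]) (simp add: gmat_def)
qed

lemma homogeneous_gmat: "pos_homogeneous A 0 (\<lambda>p. gmat K p $ i $ j)"
proof -
  have "pos_homogeneous A 0 (dY i (dY j (sq K)))"
    using pos_homogeneous_dY_smooth[OF homogeneous_dY_sq smooth_on_dY[OF smooth_sq]] by simp
  then have "pos_homogeneous A 0 (\<lambda>p. inverse 2 * dY i (dY j (sq K)) p)"
    by (rule pos_homogeneous_cmult)
  then show ?thesis by (rule pos_homogeneous_cong[OF conic_A]) (simp add: gmat_def)
qed

lemma gmat_symmetric: "p \<in> A \<Longrightarrow> gmat K p $ i $ j = gmat K p $ j $ i"
  unfolding gmat_def using dY_dY_commute[OF open_A _ smooth_sq] by simp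

lemma gmat_fibre_scale: "(x, y) \<in> A \<Longrightarrow> t > 0 \<Longrightarrow> gmat K (x, t *\<^sub>R y) = gmat K (x, y)"
  using pos_homogeneousD[OF homogeneous_gmat] by (simp add: vec_eq_iff)

lemma homogeneous_ginv: "pos_homogeneous A 0 (\<lambda>p. ginv K p $ i $ j)"
  by (rule pos_homogeneousI) (simp add: ginv_def gmat_fibre_scale)

lemma smooth_ginv: "smooth_on A (\<lambda>p. ginv K p $ i $ j)"
  unfolding ginv_def by (rule smooth_on_matrix_inv[OF open_A smooth_gmat gmat_nondegenerate])

lemma gmat_ginv: "p \<in> A \<Longrightarrow> gmat K p ** ginv K p = mat 1"
  unfolding ginv_def using matrix_inv_mult gmat_nondegenerate by blast

lemma ginv_gmat: "p \<in> A \<Longrightarrow> ginv K p ** gmat K p = mat 1"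
  unfolding ginv_def using matrix_inv_mult gmat_nondegenerate by blast

definition spray_numerator :: "2 \<Rightarrow> pt \<Rightarrow> real" where
  "spray_numerator l p = (\<Sum>k\<in>UNIV. snd p $ k * dX k (dY l (sq K)) p) - dX l (sq K) p"

lemma spray_eq: "spray K i p = 1/4 * (\<Sum>l\<in>UNIV. ginv K p $ i $ l * spray_numerator l p)"
  by (simp add: spray_def spray_numerator_def)

lemma smooth_spray_numerator: "smooth_on A (spray_numerator l)"
  unfolding spray_numerator_def[abs_def]
  by (intro smooth_on_diff smooth_on_sum smooth_on_mult open_A smooth_on_snd_nth smooth_on_dX
      smooth_on_dY smooth_sq) auto

lemma homogeneous_spray_numerator: "pos_homogeneous A 2 (spray_numerator l)"
  unfolding spray_numerator_def[abs_def]
  using pos_homogeneous_dX_smooth[OF homogeneous_dY_sq smooth_on_dY[OF smooth_sq]]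
  by (intro pos_homogeneous_diff pos_homogeneous_sum pos_homogeneous_mult[OF pos_homogeneous_snd_nth]
      pos_homogeneous_dX_smooth[OF homogeneous_sq smooth_sq]) auto

lemma smooth_spray: "smooth_on A (spray K i)"
  unfolding spray_eq[abs_def]
  by (intro smooth_on_mult smooth_on_sum open_A smooth_on_const smooth_ginv smooth_spray_numerator)
    auto

lemma homogeneous_spray: "pos_homogeneous A 2 (spray K i)"
  unfolding spray_eq[abs_def]
  by (intro pos_homogeneous_cmult pos_homogeneous_sum
      pos_homogeneous_mult[OF homogeneous_ginv homogeneous_spray_numerator]) auto

lemma gmat_spray: "p \<in> A \<Longrightarrow> (\<Sum>i\<in>UNIV. gmat K p $ l $ i * spray K i p) = spray_numerator l p / 4"
proof -
  assume p: "p \<in> A"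
  define N where "N = (\<chi> l. spray_numerator l p)"
  have "(\<chi> i. spray K i p) = (1/4) *\<^sub>R (ginv K p *v N)"
    by (simp add: vec_eq_iff spray_eq matrix_vector_mult_def N_def)
  then have "gmat K p *v (\<chi> i. spray K i p) = (1/4) *\<^sub>R N"
    by (simp add: matrix_vector_mult_scaleR matrix_vector_mul_assoc gmat_ginv[OF p])
  then show ?thesis by (simp add: vec_eq_iff matrix_vector_mult_def N_def)
qed

lemma dY_sq_eq_gmat: "(x, y) \<in> A \<Longrightarrow> dY i (sq K) (x, y) = 2 * (\<Sum>l\<in>UNIV. y $ l * gmat K (x, y) $ l $ i)"
  using euler_smooth[OF homogeneous_dY_sq smooth_on_dY[OF smooth_sq], of x y]
  by (simp add: gmat_def sum_distrib_left mult_ac)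

lemma contract_spray_numerator:
  assumes xy: "(x, y) \<in> A"
  shows "(\<Sum>l\<in>UNIV. y $ l * spray_numerator l (x, y)) = (\<Sum>k\<in>UNIV. y $ k * dX k (sq K) (x, y))"
proof -
  have yX: "(\<Sum>l\<in>UNIV. y $ l * dX k (dY l (sq K)) (x, y)) = 2 * dX k (sq K) (x, y)" for k
    using euler_smooth[OF pos_homogeneous_dX_smooth[OF homogeneous_sq smooth_sq]
        smooth_on_dX[OF smooth_sq] xy]
      dX_dY_commute[OF open_A xy smooth_sq]
    by simp
  have "(\<Sum>l\<in>UNIV. y $ l * spray_numerator l (x, y))
      = (\<Sum>l\<in>UNIV. \<Sum>k\<in>UNIV. y $ l * (y $ k * dX k (dY l (sq K)) (x, y)))
        - (\<Sum>l\<in>UNIV. y $ l * dX l (sq K) (x, y))"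
    by (simp add: spray_numerator_def right_diff_distrib sum_distrib_left sum_subtractf)
  also have "(\<Sum>l\<in>UNIV. \<Sum>k\<in>UNIV. y $ l * (y $ k * dX k (dY l (sq K)) (x, y)))
      = (\<Sum>k\<in>UNIV. y $ k * (\<Sum>l\<in>UNIV. y $ l * dX k (dY l (sq K)) (x, y)))"
    by (subst sum.swap) (simp add: sum_distrib_left mult_ac)
  also have "\<dots> = 2 * (\<Sum>k\<in>UNIV. y $ k * dX k (sq K) (x, y))"
    by (simp add: yX sum_distrib_left mult.left_commute)
  finally show ?thesis by simp
qed

lemma spray_contract_dY_sq:
  assumes xy: "(x, y) \<in> A"
  shows "(\<Sum>i\<in>UNIV. spray K i (x, y) * dY i (sq K) (x, y))
    = 1/2 * (\<Sum>k\<in>UNIV. y $ k * dX k (sq K) (x, y))"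
proof -
  have "(\<Sum>i\<in>UNIV. spray K i (x, y) * dY i (sq K) (x, y))
       = (\<Sum>i\<in>UNIV. \<Sum>l\<in>UNIV. 2 * y $ l * (gmat K (x, y) $ l $ i * spray K i (x, y)))"
    by (simp add: dY_sq_eq_gmat[OF xy] sum_distrib_left sum_distrib_right mult_ac)
  also have "\<dots> = (\<Sum>l\<in>UNIV. 2 * y $ l * (\<Sum>i\<in>UNIV. gmat K (x, y) $ l $ i * spray K i (x, y)))"
    by (subst sum.swap) (simp add: sum_distrib_left)
  also have "\<dots> = 1/2 * (\<Sum>l\<in>UNIV. y $ l * spray_numerator l (x, y))"
    by (simp add: gmat_spray[OF xy] sum_distrib_left)
  finally show ?thesis by (simp add: contract_spray_numerator[OF xy])
qed

lemma delta_sq_vanishes: "p \<in> A \<Longrightarrow> delta K j (sq K) p = 0"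
proof -
  assume p: "p \<in> A"
  have dG: "spray K i differentiable (at p)" for i
    using smooth_on_differentiable[OF smooth_spray p] .
  have dY_sq: "dY i (sq K) differentiable (at p)" for i
    using smooth_on_differentiable[OF smooth_on_dY[OF smooth_sq] p] .
  have dX_sq: "dX k (sq K) differentiable (at p)" for k
    using smooth_on_differentiable[OF smooth_on_dX[OF smooth_sq] p] .
  have "dY j (\<lambda>q. \<Sum>i\<in>UNIV. spray K i q * dY i (sq K) q) p
      = dY j (\<lambda>q. 1/2 * (\<Sum>k\<in>UNIV. snd q $ k * dX k (sq K) q)) p"
    using spray_contract_dY_sq by (intro dY_cong_open[OF open_A p]) auto
  moreover have "dY j (\<lambda>q. \<Sum>i\<in>UNIV. spray K i q * dY i (sq K) q) p
      = (\<Sum>i\<in>UNIV. dY j (spray K i) p * dY i (sq K) p + spray K i p * dY j (dY i (sq K)) p)"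
    by (simp add: dY_sum dY_mult dG dY_sq differentiable_mult)
  moreover have "dY j (\<lambda>q. 1/2 * (\<Sum>k\<in>UNIV. snd q $ k * dX k (sq K) q)) p
      = 1/2 * (\<Sum>k\<in>UNIV. dY j (\<lambda>q. snd q $ k) p * dX k (sq K) p + snd p $ k * dY j (dX k (sq K)) p)"
  proof -
    have "(\<lambda>q. \<Sum>k\<in>UNIV. snd q $ k * dX k (sq K) q) differentiable (at p)"
      by (rule differentiable_sum) (auto intro!: differentiable_mult differentiable_snd_nth dX_sq)
    then have "dY j (\<lambda>q. 1/2 * (\<Sum>k\<in>UNIV. snd q $ k * dX k (sq K) q)) p
        = 1/2 * dY j (\<lambda>q. \<Sum>k\<in>UNIV. snd q $ k * dX k (sq K) q) p"
      by (rule dY_cmult)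
    then show ?thesis
      by (simp add: dY_sum dY_mult differentiable_snd_nth dX_sq differentiable_mult)
  qed
  moreover have "(\<Sum>k\<in>UNIV. dY j (\<lambda>q. snd q $ k) p * dX k (sq K) p) = dX j (sq K) p"
    using exhaust_2[of j] by (auto simp: dY_snd_nth sum_2)
  moreover have "(\<Sum>i\<in>UNIV. spray K i p * dY j (dY i (sq K)) p) = spray_numerator j p / 2"
    using gmat_spray[OF p, of j] by (simp add: gmat_def sum_distrib_left mult_ac)
  moreover have "(\<Sum>k\<in>UNIV. snd p $ k * dY j (dX k (sq K)) p) = spray_numerator j p + dX j (sq K) p"
    using dX_dY_commute[OF open_A p smooth_sq] by (simp add: spray_numerator_def)
  ultimately have "(\<Sum>i\<in>UNIV. dY j (spray K i) p * dY i (sq K) p) = dX j (sq K) p"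
    by (simp add: sum.distrib algebra_simps)
  then show ?thesis by (simp add: delta_def nonlin_conn_def)
qed


text \<open>Conversely, vanishing of the horizontal derivative of the squared function characterises
  the spray among smooth fibrewise quadratic families.\<close>

lemma spray_numerator_eqI:
  assumes smooth_G: "\<And>s. smooth_on A (G s)" and homogeneous_G: "\<And>s. pos_homogeneous A 2 (G s)"
    and G: "\<And>q j. q \<in> A \<Longrightarrow> dX j (sq K) q = (\<Sum>s\<in>UNIV. dY j (G s) q * dY s (sq K) q)"
    and xy: "(x, y) \<in> A"
  shows "spray_numerator l (x, y) = 4 * (\<Sum>s\<in>UNIV. gmat K (x, y) $ l $ s * G s (x, y))"
proof -
  let ?p = "(x, y)"
  have diff: "f differentiable (at ?p)" if "smooth_on A f" for f
    using smooth_on_differentiable[OF that xy] .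
  have dY_dX: "dY l (dX k (sq K)) ?p
      = (\<Sum>s\<in>UNIV. dY l (dY k (G s)) ?p * dY s (sq K) ?p + dY k (G s) ?p * dY l (dY s (sq K)) ?p)" for k
  proof -
    have "dY l (dX k (sq K)) ?p = dY l (\<lambda>q. \<Sum>s\<in>UNIV. dY k (G s) q * dY s (sq K) q) ?p"
      using G by (intro dY_cong_open[OF open_A xy]) auto
    also have "\<dots> = (\<Sum>s\<in>UNIV. dY l (dY k (G s)) ?p * dY s (sq K) ?p + dY k (G s) ?p * dY l (dY s (sq K)) ?p)"
      by (simp add: dY_sum dY_mult differentiable_mult diff smooth_on_dY smooth_G smooth_sq)
    finally show ?thesis .
  qed
  have euler_dY_G: "(\<Sum>k\<in>UNIV. y $ k * dY l (dY k (G s)) ?p) = dY l (G s) ?p" for s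
    using euler_smooth[OF pos_homogeneous_dY_smooth[OF homogeneous_G smooth_G]
        smooth_on_dY[OF smooth_G] xy, of l s]
      dY_dY_commute[OF open_A xy smooth_G]
    by simp
  have euler_G: "(\<Sum>k\<in>UNIV. y $ k * dY k (G s) ?p) = 2 * G s ?p" for s
    using euler_smooth[OF homogeneous_G smooth_G xy] by simp
  have "(\<Sum>k\<in>UNIV. y $ k * dX k (dY l (sq K)) ?p)
      = (\<Sum>k\<in>UNIV. y $ k * (\<Sum>s\<in>UNIV. dY l (dY k (G s)) ?p * dY s (sq K) ?p
           + dY k (G s) ?p * dY l (dY s (sq K)) ?p))"
    using dX_dY_commute[OF open_A xy smooth_sq] by (simp add: dY_dX[symmetric])
  also have "\<dots> = (\<Sum>s\<in>UNIV. (\<Sum>k\<in>UNIV. y $ k * dY l (dY k (G s)) ?p) * dY s (sq K) ?p)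
      + (\<Sum>s\<in>UNIV. (\<Sum>k\<in>UNIV. y $ k * dY k (G s) ?p) * dY l (dY s (sq K)) ?p)"
    by (simp add: sum_2 algebra_simps)
  also have "\<dots> = dX l (sq K) ?p + 4 * (\<Sum>s\<in>UNIV. gmat K ?p $ l $ s * G s ?p)"
    by (simp only: euler_dY_G euler_G G[OF xy, symmetric]) (simp add: gmat_def sum_2 algebra_simps)
  finally show ?thesis by (simp add: spray_numerator_def)
qed

lemma spray_eqI:
  assumes "\<And>s. smooth_on A (G s)" and "\<And>s. pos_homogeneous A 2 (G s)"
    and "\<And>q j. q \<in> A \<Longrightarrow> dX j (sq K) q = (\<Sum>s\<in>UNIV. dY j (G s) q * dY s (sq K) q)"
    and "p \<in> A"
  shows "spray K i p = G i p"
proof -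
  obtain x y where p: "p = (x, y)" by (cases p)
  have "spray K i p = (\<Sum>s\<in>UNIV. (ginv K p ** gmat K p) $ i $ s * G s p)"
    using spray_numerator_eqI[OF assms(1-3), of x y] assms(4)
    by (simp add: p spray_eq matrix_matrix_mult_def sum_distrib_left sum_2 algebra_simps)
  also have "\<dots> = G i p"
    using ginv_gmat[OF assms(4)] exhaust_2[of i] by (auto simp: sum_2 mat_def)
  finally show ?thesis .
qed

end

lemma berwald_conn_eq_iff_spray_eq:
  assumes K: "conic_pseudo_finsler A K" and K': "conic_pseudo_finsler A K'"
  shows "(\<forall>p\<in>A. \<forall>i j k. berwald_conn K i j k p = berwald_conn K' i j k p)
     \<longleftrightarrow> (\<forall>p\<in>A. \<forall>i. spray K i p = spray K' i p)"
proof
  interpret K: conic_pseudo_finsler A K by (rule K)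
  interpret K': conic_pseudo_finsler A K' by (rule K')
  assume "\<forall>p\<in>A. \<forall>i j k. berwald_conn K i j k p = berwald_conn K' i j k p"
  then have "dY k (dY j (spray K i)) q = dY k (dY j (spray K' i)) q" if "q \<in> A" for q i j k
    using that by (simp add: berwald_conn_def)
  then show "\<forall>p\<in>A. \<forall>i. spray K i p = spray K' i p"
    using pos_homogeneous_2_eqI[OF K.open_A K.conic_A K.smooth_spray K'.smooth_spray
        K.homogeneous_spray K'.homogeneous_spray] by blast
next
  assume eq: "\<forall>p\<in>A. \<forall>i. spray K i p = spray K' i p"
  have "open A" using K conic_pseudo_finsler.open_A by blast
  show "\<forall>p\<in>A. \<forall>i j k. berwald_conn K i j k p = berwald_conn K' i j k p"
  proof (intro ballI allI)
    fix p i j k assume p: "p \<in> A"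
    have "dY j (spray K i) q = dY j (spray K' i) q" if "q \<in> A" for q
      using eq by (intro dY_cong_open[OF \<open>open A\<close> that]) auto
    then show "berwald_conn K i j k p = berwald_conn K' i j k p"
      unfolding berwald_conn_def by (rule dY_cong_open[OF \<open>open A\<close> p])
  qed
qed

section \<open>Anisotropic conformal change\<close>

locale anisotropic_conformal_change = conic_pseudo_finsler A F for A F +
  fixes phi :: "pt \<Rightarrow> real"
  assumes smooth_phi: "smooth_on A phi" and homogeneous_phi: "pos_homogeneous A 0 phi"
begin

abbreviation Fbar :: "pt \<Rightarrow> real" where
  "Fbar \<equiv> \<lambda>p. exp (phi p) * F p"

definition exp_2phi :: "pt \<Rightarrow> real" where
  "exp_2phi q = exp (2 * phi q)"

lemma sq_Fbar: "sq Fbar = (\<lambda>q. exp_2phi q * sq F q)"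
  by (simp add: exp_2phi_def fun_eq_iff power_mult_distrib exp_double)

lemma smooth_exp_2phi: "smooth_on A exp_2phi"
  unfolding exp_2phi_def[abs_def]
  by (intro smooth_on_exp smooth_on_mult open_A smooth_on_const smooth_phi)

lemma dY_exp_2phi: "q \<in> A \<Longrightarrow> dY j exp_2phi q = 2 * exp_2phi q * dY j phi q"
  unfolding exp_2phi_def[abs_def] using smooth_on_differentiable[OF smooth_phi]
  by (simp add: dY_exp dY_cmult differentiable_mult)

lemma dX_exp_2phi: "q \<in> A \<Longrightarrow> dX j exp_2phi q = 2 * exp_2phi q * dX j phi q"
  unfolding exp_2phi_def[abs_def] using smooth_on_differentiable[OF smooth_phi]
  by (simp add: dX_exp dX_cmult differentiable_mult)

lemma dY_sq_eq_multbar: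
  "q \<in> A \<Longrightarrow> dY j (sq Fbar) q = exp_2phi q * (2 * dY j phi q * (F q)\<^sup>2 + dY j (sq F) q)"
  unfolding sq_Fbar
  using dY_mult[OF smooth_on_differentiable[OF smooth_exp_2phi] smooth_on_differentiable[OF smooth_sq],
      of q j]
  by (simp add: dY_exp_2phi algebra_simps)

lemma dX_sq_Fbar:
  "q \<in> A \<Longrightarrow> dX j (sq Fbar) q = exp_2phi q * (2 * dX j phi q * (F q)\<^sup>2 + dX j (sq F) q)"
  unfolding sq_Fbar
  using dX_mult[OF smooth_on_differentiable[OF smooth_exp_2phi] smooth_on_differentiable[OF smooth_sq],
      of q j]
  by (simp add: dX_exp_2phi algebra_simps)

lemma gmat_Fbar:
  assumes p: "p \<in> A"
  shows "gmat Fbar p $ i $ j = exp_2phi p * (gmat F p $ i $ j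
      + 2 * F p * (dY i phi p * dY j F p + dY i F p * dY j phi p)
      + (F p)\<^sup>2 * (2 * dY i phi p * dY j phi p + dY i (dY j phi) p))"
proof -
  have diff: "f differentiable (at p)" if "smooth_on A f" for f
    using smooth_on_differentiable[OF that p] .
  have "dY i (dY j (sq Fbar)) p
      = dY i (\<lambda>q. exp_2phi q * (2 * dY j phi q * (F q)\<^sup>2 + 2 * F q * dY j F q)) p"
    by (rule dY_cong_open[OF open_A p]) (simp only: dY_sq_eq_multbar dY_sq_eq_mult)
  also have "\<dots> = dY i exp_2phi p * (2 * dY j phi p * (F p)\<^sup>2 + 2 * F p * dY j F p)
     + exp_2phi p * (2 * (dY i (dY j phi) p * (F p)\<^sup>2 + dY j phi p * (2 * F p * dY i F p))
               + 2 * (dY i F p * dY j F p + F p * dY i (dY j F) p))"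
    by (simp add: dY_mult dY_cmult dY_add dY_power2 differentiable_mult diff smooth_exp_2phi smooth_K
        smooth_phi smooth_on_dY differentiable_power)
  also have "\<dots> = 2 * exp_2phi p * (gmat F p $ i $ j
      + 2 * F p * (dY i phi p * dY j F p + dY i F p * dY j phi p)
      + (F p)\<^sup>2 * (2 * dY i phi p * dY j phi p + dY i (dY j phi) p))"
    unfolding gmat_eq_dY[OF p] dY_exp_2phi[OF p] by (simp add: algebra_simps power2_eq_square)
  finally show ?thesis by (simp add: gmat_def)
qed

lemma delta_sq_Fbar: "q \<in> A \<Longrightarrow> delta F j (sq Fbar) q = 2 * exp_2phi q * (F q)\<^sup>2 * delta F j phi q"
proof -
  assume q: "q \<in> A"
  have "delta F j (sq Fbar) q = exp_2phi q * (2 * dX j phi q * (F q)\<^sup>2 + dX j (sq F) q)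
      - (\<Sum>s\<in>UNIV. nonlin_conn F s j q * (exp_2phi q * (2 * dY s phi q * (F q)\<^sup>2 + dY s (sq F) q)))"
    by (simp only: delta_def dY_sq_eq_multbar[OF q] dX_sq_Fbar[OF q])
  also have "\<dots> = 2 * exp_2phi q * (F q)\<^sup>2 * delta F j phi q + exp_2phi q * delta F j (sq F) q"
    by (simp add: delta_def sum_2 algebra_simps)
  finally show ?thesis by (simp add: delta_sq_vanishes[OF q])
qed

end

locale conformal_change_with_frame = anisotropic_conformal_change A F phi for A F phi +
  fixes eps :: "pt \<Rightarrow> real" and m :: "pt \<Rightarrow> real^2"
  assumes frame: "\<And>p i j. p \<in> A \<Longrightarrow> gmat F p $ i $ j = dY i F p * dY j F p + eps p * m p $ i * m p $ j"
    and eps_cases: "\<And>p. p \<in> A \<Longrightarrow> eps p = 1 \<or> eps p = -1"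
    and admissible: "\<And>p. p \<in> A \<Longrightarrow> (F p)\<^sup>2 * (\<Sum>i\<in>UNIV. \<Sum>j\<in>UNIV.
        (dY i (dY j phi) p + dY i phi p * dY j phi p) * m_up F m p $ i * m_up F m p $ j) + eps p \<noteq> 0"
begin

lemma modified_berwald_frame_at:
  assumes p: "p \<in> A"
  shows "modified_berwald_frame (snd p) (\<chi> i. dY i F p) (m p) (gmat F p) (ginv F p) (F p) (eps p)"
proof
  obtain x y where xy: "p = (x, y)" by (cases p)
  show "gmat F p $ i $ j = (\<chi> i. dY i F p) $ i * (\<chi> i. dY i F p) $ j + eps p * m p $ i * m p $ j" for i j
    using frame[OF p] by simp
  show "eps p = 1 \<or> eps p = -1" using eps_cases[OF p] .
  show "gmat F p ** ginv F p = mat 1" using gmat_ginv[OF p] .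
  show "F p \<noteq> 0" using K_nonzero[OF p] .
  show "snd p \<bullet> (\<chi> i. dY i F p) = F p"
    using euler_smooth[OF homogeneous_K smooth_K, of x y] p xy by (simp add: inner_vec_def)
  have "2 * F p * dY i F p = 2 * (\<Sum>l\<in>UNIV. gmat F p $ i $ l * y $ l)" for i
    using dY_sq_eq_mult[OF p] dY_sq_eq_gmat[of x y i] gmat_symmetric[OF p] p xy by (simp add: mult.commute)
  then show "gmat F p *v snd p = F p *\<^sub>R (\<chi> i. dY i F p)"
    using xy by (simp add: vec_eq_iff matrix_vector_mult_def)
qed

lemma gmat_Fbar_nondegenerate: "p \<in> A \<Longrightarrow> det (gmat Fbar p) \<noteq> 0"
proof -
  assume p: "p \<in> A"
  obtain x y where xy: "p = (x, y)" by (cases p)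
  interpret frame: modified_berwald_frame "snd p" "\<chi> i. dY i F p" "m p" "gmat F p" "ginv F p" "F p" "eps p"
    by (rule modified_berwald_frame_at[OF p])
  let ?H = "\<chi> i j. dY i (dY j phi) p"
  show ?thesis
  proof (rule frame.det_conformal_metric_nonzero[where dphi = "\<chi> i. dY i phi p" and H = ?H])
    show "exp_2phi p \<noteq> 0" by (simp add: exp_2phi_def)
    show "snd p \<bullet> (\<chi> i. dY i phi p) = 0"
      using euler_smooth[OF homogeneous_phi smooth_phi, of x y] p xy by (simp add: inner_vec_def)
    show "transpose ?H = ?H"
      using dY_dY_commute[OF open_A p smooth_phi] by (simp add: vec_eq_iff transpose_def)
    have "(\<Sum>j\<in>UNIV. y $ j * dY j (dY i phi) (x, y)) = (0 - 1) * dY i phi (x, y)" for i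
      using euler_smooth[OF pos_homogeneous_dY_smooth[OF homogeneous_phi smooth_phi]
          smooth_on_dY[OF smooth_phi]] p xy by blast
    then show "?H *v snd p = - (\<chi> i. dY i phi p)"
      using dY_dY_commute[OF open_A p smooth_phi] xy
      by (simp add: vec_eq_iff matrix_vector_mult_def mult.commute)
    show "gmat Fbar p $ i $ j = exp_2phi p * (gmat F p $ i $ j
        + 2 * F p * ((\<chi> i. dY i phi p) $ i * (\<chi> i. dY i F p) $ j + (\<chi> i. dY i F p) $ i * (\<chi> i. dY i phi p) $ j)
        + (F p)\<^sup>2 * (2 * (\<chi> i. dY i phi p) $ i * (\<chi> i. dY i phi p) $ j + ?H $ i $ j))" for i j
      using gmat_Fbar[OF p] by simp
    show "(F p)\<^sup>2 * (\<Sum>i\<in>UNIV. \<Sum>j\<in>UNIV. (?H $ i $ j + (\<chi> i. dY i phi p) $ i * (\<chi> i. dY i phi p) $ j)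
        * frame.m_raised $ i * frame.m_raised $ j) + eps p \<noteq> 0"
      using admissible[OF p] by (simp add: frame.m_raised_def m_up_def)
  qed
qed

lemma conic_pseudo_finsler_Fbar: "conic_pseudo_finsler A Fbar"
proof
  show "smooth_on A Fbar" by (intro smooth_on_mult smooth_on_exp open_A smooth_phi smooth_K)
  show "pos_homogeneous A 1 Fbar"
    by (rule pos_homogeneous_mult[OF pos_homogeneous_exp[OF homogeneous_phi] homogeneous_K]) simp
  show "exp (phi p) * F p \<noteq> 0" if "p \<in> A" for p using K_nonzero[OF that] by simp
qed (use open_A conic_A gmat_Fbar_nondegenerate in auto)

lemma comma_eq_0_iff:
  assumes p: "p \<in> A"
  shows "comma1 F phi p = 0 \<and> comma2 F eps m phi p = 0 \<longleftrightarrow> (\<forall>j. delta F j phi p = 0)"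
proof -
  interpret frame: modified_berwald_frame "snd p" "\<chi> i. dY i F p" "m p" "gmat F p" "ginv F p" "F p" "eps p"
    by (rule modified_berwald_frame_at[OF p])
  define w where "w = (\<chi> j. delta F j phi p)"
  have "comma1 F phi p = frame.ell_raised \<bullet> w" "comma2 F eps m phi p = eps p * (frame.m_raised \<bullet> w)"
    by (simp_all add: comma1_def comma2_def frame.ell_raised_def ell_up_def frame.m_raised_def m_up_def
        inner_vec_def w_def)
  moreover have "eps p \<noteq> 0" using eps_cases[OF p] by auto
  moreover have "(\<forall>j. delta F j phi p = 0) \<longleftrightarrow> w = 0" by (simp add: w_def vec_eq_iff)
  ultimately show ?thesis using frame.eq_0_if_frame_components_0[of w] by auto
qed

lemma spray_Fbar_eq_iff:
  "(\<forall>p\<in>A. \<forall>i. spray Fbar i p = spray F i p) \<longleftrightarrow> (\<forall>p\<in>A. \<forall>j. delta F j phi p = 0)"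
proof
  interpret Fbar: conic_pseudo_finsler A Fbar by (rule conic_pseudo_finsler_Fbar)
  assume eq: "\<forall>p\<in>A. \<forall>i. spray Fbar i p = spray F i p"
  show "\<forall>p\<in>A. \<forall>j. delta F j phi p = 0"
  proof (intro ballI allI)
    fix p j assume p: "p \<in> A"
    have "nonlin_conn Fbar i j p = nonlin_conn F i j p" for i
      unfolding nonlin_conn_def using eq by (intro dY_cong_open[OF open_A p]) auto
    then have "delta F j (sq Fbar) p = delta Fbar j (sq Fbar) p" by (simp add: delta_def)
    then have "2 * exp_2phi p * (F p)\<^sup>2 * delta F j phi p = 0"
      using Fbar.delta_sq_vanishes[OF p] delta_sq_Fbar[OF p] by simp
    then show "delta F j phi p = 0" using K_nonzero[OF p] by (simp add: exp_2phi_def)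
  qed
next
  interpret Fbar: conic_pseudo_finsler A Fbar by (rule conic_pseudo_finsler_Fbar)
  assume "\<forall>p\<in>A. \<forall>j. delta F j phi p = 0"
  then have "delta F j (sq Fbar) q = 0" if "q \<in> A" for q j
    using delta_sq_Fbar[OF that] that by simp
  then have "dX j (sq Fbar) q = (\<Sum>s\<in>UNIV. dY j (spray F s) q * dY s (sq Fbar) q)" if "q \<in> A" for q j
    using that by (simp add: delta_def nonlin_conn_def)
  then show "\<forall>p\<in>A. \<forall>i. spray Fbar i p = spray F i p"
    using Fbar.spray_eqI[where G = "spray F", OF smooth_spray homogeneous_spray] by blast
qed

end

theorem proposition3p10:
  fixes A :: "pt set" and F phi eps :: "pt \<Rightarrow> real" and m :: "pt \<Rightarrow> real^2"
  assumes "pseudo_finsler A F"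
    and "pseudo_riemannian A F"
    and "berwald_frame A F eps m"
    and "aniso_conformal A F eps m phi"
    and "is_berwald A (\<lambda>p. exp (phi p) * F p)"
  shows "(\<forall>p\<in>A. \<forall>i j k. berwald_conn (\<lambda>q. exp (phi q) * F q) i j k p = berwald_conn F i j k p)
     \<longleftrightarrow> (\<forall>p\<in>A. comma1 F phi p = 0 \<and> comma2 F eps m phi p = 0)"
proof -
  interpret conformal_change_with_frame A F phi eps m
  proof unfold_locales
    show "open A" "conic A" "smooth_on A F" "pos_homogeneous A 1 F"
      "\<And>p. p \<in> A \<Longrightarrow> F p \<noteq> 0" "\<And>p. p \<in> A \<Longrightarrow> det (gmat F p) \<noteq> 0"
      using assms(1) unfolding pseudo_finsler_def conic_subbundle_def conic_def
      by (auto dest: pos_homogeneous_if_homog_on)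
  qed (use assms(3,4) in \<open>auto simp: berwald_frame_def aniso_conformal_def
      dest: pos_homogeneous_if_homog_on\<close>)
  have "conic_pseudo_finsler A F" by unfold_locales
  then show ?thesis
    using berwald_conn_eq_iff_spray_eq[OF conic_pseudo_finsler_Fbar] spray_Fbar_eq_iff comma_eq_0_iff
    by auto
qed

end
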